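(* Let $m=2n$, let $B$ be a real skew-symmetric $m\times m$ matrix with trivial kernel, let $p\ge2$, $\theta\in\mathbb R$, and let $d$ be a regular positive homogeneous function on $\mathcal G$. Then, in the sense of distributions on $\mathcal G\setminus\{0\}$: (i) $\displaystyle \mathrm{Div}_{\mathcal G}\!\left(\frac{t}{d^{p\theta+1}}\,B^{-1}\nabla_{\mathcal G}d\right)=-\frac12\,\frac{\langle z,\nabla_{\mathcal G}d\rangle}{d^{p\theta+1}}+n\,\frac{t}{d^{p\theta+1}}\,\partial_td$; (ii) $\displaystyle \mathrm{Div}_{\mathcal G}\!\left(\frac{z}{d^{p\theta}}\right)=\frac{2n}{d^{p\theta}}-\frac{p\theta}{d^{p\theta+1}}\langle z,\nabla_{\mathcal G}d\rangle$.
   Context: $\mathcal G$ is $\mathbb R^m\times\mathbb R$ with coordinates $(z,t)$, group law $(z,t)\circ(\eta,\tau)=(z+\eta,t+\tau+\tfrac12\langle Bz,\eta\rangle)$, dilations $\delta_\gamma(z,t)=(\gamma z,\gamma^2t)$. Horizontal vector fields $X_i=\partial_{z_i}+\tfrac12(Bz)_i\partial_t$, $\nabla_{\mathcal G}u=(X_1u,\dots,X_mu)$; horizontal vector fields are identified with $\mathbb R^m$-valued functions via this basis (so e.g. $z$ denotes $\sum_i z_iX_i$). For a horizontal field $V=\sum V_iX_i$, $\mathrm{Div}_{\mathcal G}V=\sum_iX_iV_i$, understood distributionally as $\langle \mathrm{Div}_{\mathcal G}V,\phi\rangle=-\int\langle V,\nabla_{\mathcal G}\phi\rangle$. $L=\{z=0\}$.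 A continuous $d:\mathbb R^{m+1}\to[0,\infty)$ is positive homogeneous if $d(\delta_\lambda(z,t))=\lambda d(z,t)$ for $\lambda>0$ and $d>0$ off the origin; it is regular if (d.1) $d\in C^\infty(\mathcal G\setminus L)$; (d.2) $\nabla_{\mathcal G}d,\partial_td\in L^\infty_{\mathrm{loc}}(\mathcal G\setminus\{0\})$; (d.3) for a.e. $t$, $\lim_{|z|\to0}\langle z/|z|,B^{-1}\nabla_{\mathcal G}d\rangle=0$. *)

theory Defs
  imports "HOL-Analysis.Analysis"
begin

text \<open>Points of the group are pairs (z,t) with z in real^'m and t real.
  B is an m x m real matrix (type real^'m^'m).\<close>

fun Ck_on :: "nat \<Rightarrow> 'a::euclidean_space set \<Rightarrow> ('a \<Rightarrow> real) \<Rightarrow> bool" where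
  "Ck_on 0 S f = continuous_on S f"
| "Ck_on (Suc k) S f =
     ((\<forall>x\<in>S. f differentiable (at x)) \<and>
      (\<forall>v. Ck_on k S (\<lambda>x. frechet_derivative f (at x) v)))"

definition smooth_on :: "'a::euclidean_space set \<Rightarrow> ('a \<Rightarrow> real) \<Rightarrow> bool" where
  "smooth_on S f \<longleftrightarrow> (\<forall>k. Ck_on k S f)"

definition dz :: "'m::finite \<Rightarrow> ((real^'m) \<times> real \<Rightarrow> real) \<Rightarrow> (real^'m) \<times> real \<Rightarrow> real" where
  "dz i f x = frechet_derivative f (at x) (axis i 1, 0)"

definition dt :: "((real^'m::finite) \<times> real \<Rightarrow> real) \<Rightarrow> (real^'m) \<times> real \<Rightarrow> real" where
  "dt f x = frechet_derivative f (at x) (0, 1)"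

definition hgrad :: "real^'m^'m \<Rightarrow> ((real^'m::finite) \<times> real \<Rightarrow> real) \<Rightarrow> (real^'m) \<times> real \<Rightarrow> real^'m" where
  "hgrad B f x = (\<chi> i. dz i f x + (1/2) * (B *v fst x) $ i * dt f x)"

definition Lline :: "((real^'m::finite) \<times> real) set" where
  "Lline = {x. fst x = 0}"

definition pos_homogeneous :: "((real^'m::finite) \<times> real \<Rightarrow> real) \<Rightarrow> bool" where
  "pos_homogeneous d \<longleftrightarrow>
     continuous_on UNIV d \<and> (\<forall>x. d x \<ge> 0) \<and>
     (\<forall>\<gamma> z t. \<gamma> > 0 \<longrightarrow> d (\<gamma> *\<^sub>R z, \<gamma>\<^sup>2 * t) = \<gamma> * d (z, t)) \<and>
     (\<forall>x. x \<noteq> 0 \<longrightarrow> d x > 0)"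

definition regular :: "real^'m^'m \<Rightarrow> ((real^'m::finite) \<times> real \<Rightarrow> real) \<Rightarrow> bool" where
  "regular B d \<longleftrightarrow>
     smooth_on (- Lline) d \<and>
     (\<forall>K. compact K \<and> K \<subseteq> - {0} \<longrightarrow>
        bounded (hgrad B d ` (K - Lline)) \<and> bounded (dt d ` (K - Lline))) \<and>
     (AE t in lborel.
        ((\<lambda>z. (inverse (norm z) *\<^sub>R z) \<bullet> (matrix_inv B *v hgrad B d (z, t))) \<longlongrightarrow> 0) (at 0))"

definition test_fun :: "((real^'m::finite) \<times> real) set \<Rightarrow> ((real^'m) \<times> real \<Rightarrow> real) \<Rightarrow> bool" where
  "test_fun U \<phi> \<longleftrightarrow> smooth_on UNIV \<phi> \<and>
     compact (closure {x. \<phi> x \<noteq> 0}) \<and> closure {x. \<phi> x \<noteq> 0} \<subseteq> U"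

definition hdiv_eq :: "real^'m^'m \<Rightarrow> ((real^'m::finite) \<times> real) set \<Rightarrow>
    ((real^'m) \<times> real \<Rightarrow> real^'m) \<Rightarrow> ((real^'m) \<times> real \<Rightarrow> real) \<Rightarrow> bool" where
  "hdiv_eq B U V F \<longleftrightarrow> (\<forall>\<phi>. test_fun U \<phi> \<longrightarrow>
     integrable lebesgue (\<lambda>x. V x \<bullet> hgrad B \<phi> x) \<and>
     integrable lebesgue (\<lambda>x. F x * \<phi> x) \<and>
     - (\<integral>x. V x \<bullet> hgrad B \<phi> x \<partial>lebesgue) = (\<integral>x. F x * \<phi> x \<partial>lebesgue))"

end

theory Submission
  imports Defs
begin

text \<open>Both fields are \<open>C\<^sup>1\<close> away from the vertical line \<open>L\<close>, and there their pointwise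
  horizontal divergence is a direct computation. For \<open>z / d\<^sup>a\<close> it is the chain rule together
  with \<open>Div z = m\<close>. For \<open>t d\<^sup>-\<^sup>a B\<^sup>-\<^sup>1\<nabla>d\<close>, the second derivatives \<open>X\<^sub>iX\<^sub>jd\<close> split into a symmetric
  Hessian, which is annihilated by the skew matrix \<open>B\<^sup>-\<^sup>1\<close>, and the commutator term
  \<open>B\<^sub>j\<^sub>i \<partial>\<^sub>td / 2\<close>, which contributes \<open>trace (B\<^sup>-\<^sup>1B) / 2 = n\<close>.

  To pass to distributions on \<open>\<G> - {0}\<close>, the test function \<open>\<phi>\<close> is multiplied by a cut-off
  \<open>\<chi>\<^sub>r\<close> vanishing within distance \<open>r\<close> of \<open>L\<close>. The field \<open>\<phi> \<chi>\<^sub>r V\<close> is \<open>C\<^sup>1\<close> with compact support,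
  so its divergence integrates to zero, since \<open>X\<^sub>ig = \<partial>g/\<partial>z\<^sub>i + \<partial>\<^sub>t((Bz)\<^sub>ig / 2)\<close>. The only
  error term is \<open>\<integral> \<phi> V \<cdot> \<nabla>\<chi>\<^sub>r\<close>: \<open>V\<close> is locally bounded, \<open>|\<nabla>\<chi>\<^sub>r| \<le> 8/r\<close> and \<open>\<nabla>\<chi>\<^sub>r\<close> is supported in
  a set of volume \<open>O(r\<^sup>m)\<close>, so the error is \<open>O(r\<^sup>m\<^sup>-\<^sup>1)\<close> and vanishes as \<open>r \<rightarrow> 0\<close> because
  \<open>m = 2n \<ge> 2\<close>.\<close>

section \<open>Calculus on Euclidean spaces\<close>

lemma Ck_on_SucD:
  assumes "Ck_on (Suc k) S f"
  shows "x \<in> S \<Longrightarrow> (f has_derivative frechet_derivative f (at x)) (at x)"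
    and "Ck_on k S (\<lambda>x. frechet_derivative f (at x) v)"
  using assms frechet_derivative_works unfolding Ck_on.simps by blast+

lemma has_real_derivative_along_line:
  fixes f :: "'a::real_normed_vector \<Rightarrow> real"
  assumes "(f has_derivative f') (at (a + s *\<^sub>R v))"
  shows "((\<lambda>s. f (a + s *\<^sub>R v)) has_real_derivative f' v) (at s)"
proof -
  have "((\<lambda>s. a + s *\<^sub>R v) has_derivative (\<lambda>h. h *\<^sub>R v)) (at s)"
    by (auto intro!: derivative_eq_intros)
  from has_derivative_compose[OF this assms]
  have "((\<lambda>s. f (a + s *\<^sub>R v)) has_derivative (\<lambda>h. f' (h *\<^sub>R v))) (at s)"
    by (simp add: o_def)
  moreover have "(\<lambda>h. f' (h *\<^sub>R v)) = (\<lambda>h. f' v * h)"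
    using has_derivative_linear[OF assms] by (auto simp: linear_scale)
  ultimately show ?thesis by (simp add: has_field_derivative_def)
qed

lemma has_derivative_zero_outside_closed:
  fixes f :: "'a::real_normed_vector \<Rightarrow> 'b::real_normed_vector"
  assumes "closed S" "x \<notin> S" "\<And>y. y \<notin> S \<Longrightarrow> f y = 0"
  shows "(f has_derivative (\<lambda>_. 0)) (at x)"
  by (rule has_derivative_transform_within_open[OF has_derivative_const[of 0], of "- S"])
    (use assms in auto)

lemma continuous_compact_support_bounded:
  fixes g :: "'a::topological_space \<Rightarrow> 'b::real_normed_vector"
  assumes "continuous_on UNIV g" "compact S" "\<And>x. x \<notin> S \<Longrightarrow> g x = 0"
  shows "\<exists>M. \<forall>x. norm (g x) \<le> M"
proof -
  have "compact (g ` S)"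
    using assms by (meson compact_continuous_image continuous_on_subset top_greatest)
  then obtain M where "\<forall>y\<in>g ` S. norm y \<le> M"
    using compact_imp_bounded bounded_iff by metis
  then have "norm (g x) \<le> max M 0" for x
    using assms(3)[of x] by (cases "x \<in> S") auto
  then show ?thesis by blast
qed

lemma continuous_imp_borel_measurable_lebesgue:
  fixes g :: "'a::euclidean_space \<Rightarrow> 'b::euclidean_space"
  assumes "continuous_on UNIV g"
  shows "g \<in> borel_measurable lebesgue"
  using measurable_completion[of g lborel borel] borel_measurable_continuous_onI[OF assms] by simp

lemma integrable_bounded_compact_support:
  fixes g :: "'a::euclidean_space \<Rightarrow> real"
  assumes "g \<in> borel_measurable lebesgue" "compact S" "\<And>x. x \<notin> S \<Longrightarrow> g x = 0"
    and "AE x in lebesgue. \<bar>g x\<bar> \<le> M"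
  shows "integrable lebesgue g"
proof (rule Bochner_Integration.integrable_bound)
  show "integrable lebesgue (\<lambda>x. M * indicator S x)"
    using lmeasurable_compact[OF assms(2)] by (auto simp: fmeasurable_def)
  show "AE x in lebesgue. norm (g x) \<le> norm (M * indicator S x)"
    using assms(4) by eventually_elim (use assms(3) in \<open>auto simp: indicator_def\<close>)
qed (use assms in auto)

lemma integral_lebesgue_translate:
  fixes g :: "'a::euclidean_space \<Rightarrow> real"
  assumes "g \<in> borel_measurable borel"
  shows "(\<integral>x. g (x + c) \<partial>lebesgue) = (\<integral>x. g x \<partial>lebesgue)"
proof -
  have "(\<lambda>x. g (x + c)) \<in> borel_measurable borel"
    using assms by measurable
  then have "(\<integral>x. g (x + c) \<partial>lebesgue) = (\<integral>x. g (c + x) \<partial>lborel)"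
    by (subst integral_completion) (simp_all add: add.commute)
  also have "\<dots> = integral\<^sup>L (distr lborel borel ((+) c)) g"
    by (rule integral_distr[symmetric]) (auto simp: assms)
  also have "\<dots> = (\<integral>x. g x \<partial>lebesgue)"
    by (simp add: lborel_distr_plus integral_completion assms)
  finally show ?thesis .
qed

lemma integral_difference_quotient_eq_0:
  fixes g :: "'a::euclidean_space \<Rightarrow> real"
  assumes cont: "continuous_on UNIV g" and S: "compact S" and g0: "\<And>x. x \<notin> S \<Longrightarrow> g x = 0"
  shows "(\<integral>x. (g (x + c) - g x) / h \<partial>lebesgue) = 0"
proof -
  obtain M where M: "\<And>x. norm (g x) \<le> M"
    using continuous_compact_support_bounded[OF cont S g0] by blast
  have g_borel: "g \<in> borel_measurable borel"
    by (rule borel_measurable_continuous_onI[OF cont])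
  have "integrable lebesgue g"
    by (rule integrable_bounded_compact_support[OF continuous_imp_borel_measurable_lebesgue[OF cont] S g0])
      (use M in auto)
  moreover have "integrable lebesgue (\<lambda>x. g (x + c))"
  proof (rule integrable_bounded_compact_support)
    show "(\<lambda>x. g (x + c)) \<in> borel_measurable lebesgue"
      by (intro continuous_imp_borel_measurable_lebesgue continuous_on_compose2[OF cont])
        (auto intro!: continuous_intros)
    show "compact ((\<lambda>x. x - c) ` S)"
      by (intro compact_continuous_image S) (auto intro!: continuous_intros)
    show "g (x + c) = 0" if "x \<notin> (\<lambda>x. x - c) ` S" for x
      using that g0[of "x + c"] by (metis add_diff_cancel image_eqI)
  qed (use M in auto)
  ultimately show ?thesis
    by (simp add: integral_lebesgue_translate[OF g_borel])
qed

lemma difference_quotient_bound: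
  fixes g :: "'a::real_normed_vector \<Rightarrow> real"
  assumes der: "\<And>x. (g has_derivative Dg x) (at x)" and M: "\<And>x. \<bar>Dg x e\<bar> \<le> M"
    and g0: "\<And>x. x \<notin> S \<Longrightarrow> g x = 0" and h: "0 < h" "h \<le> 1"
  shows "\<bar>(g (x + h *\<^sub>R e) - g x) / h\<bar> \<le> M * indicator ((\<lambda>p. fst p - snd p *\<^sub>R e) ` (S \<times> {0..1})) x"
proof (cases "x \<in> (\<lambda>p. fst p - snd p *\<^sub>R e) ` (S \<times> {0..1})")
  case False
  have "x \<notin> S"
    using False by (auto intro!: image_eqI[where x="(x, 0)"])
  moreover have "x + h *\<^sub>R e \<notin> S"
    using False h by (auto intro!: image_eqI[where x="(x + h *\<^sub>R e, h)"])
  ultimately show ?thesis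
    using g0 False by simp
next
  case True
  obtain s where "g (x + h *\<^sub>R e) - g (x + 0 *\<^sub>R e) = (h - 0) * Dg (x + s *\<^sub>R e) e"
    using MVT2[OF h(1), of "\<lambda>s. g (x + s *\<^sub>R e)" "\<lambda>s. Dg (x + s *\<^sub>R e) e"]
      has_real_derivative_along_line[OF der] by blast
  then show ?thesis
    using M True h(1) by simp
qed

lemma tendsto_difference_quotient:
  fixes g :: "'a::real_normed_vector \<Rightarrow> real"
  assumes "(g has_derivative Dg) (at x)" "filterlim h (at 0) F"
  shows "((\<lambda>k. (g (x + h k *\<^sub>R e) - g x) / h k) \<longlongrightarrow> Dg e) F"
proof -
  have "((\<lambda>s. (g (x + s *\<^sub>R e) - g x) / s) \<longlongrightarrow> Dg e) (at 0)"
    using has_real_derivative_along_line[where s=0, of g Dg x e] assms(1)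
    by (simp add: has_field_derivative_iff)
  from filterlim_compose[OF this assms(2)] show ?thesis
    by (simp add: o_def)
qed

lemma integral_derivative_compact_support_eq_0:
  fixes g :: "'a::euclidean_space \<Rightarrow> real"
  assumes der: "\<And>x. (g has_derivative Dg x) (at x)"
    and cont: "continuous_on UNIV (\<lambda>x. Dg x e)"
    and S: "compact S" and g0: "\<And>x. x \<notin> S \<Longrightarrow> g x = 0"
  shows "integrable lebesgue (\<lambda>x. Dg x e)" and "(\<integral>x. Dg x e \<partial>lebesgue) = 0"
proof -
  have g_cont: "continuous_on UNIV g"
    by (intro continuous_at_imp_continuous_on ballI has_derivative_continuous[OF der])
  have Dg0: "Dg x e = 0" if "x \<notin> S" for x
    using has_derivative_unique[OF der has_derivative_zero_outside_closed[OF compact_imp_closed[OF S] that g0]]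
    by simp
  obtain M where M: "\<And>x. \<bar>Dg x e\<bar> \<le> M"
    using continuous_compact_support_bounded[OF cont S Dg0] by auto
  show "integrable lebesgue (\<lambda>x. Dg x e)"
    by (rule integrable_bounded_compact_support[OF continuous_imp_borel_measurable_lebesgue[OF cont] S Dg0])
      (use M in auto)
  define S' where "S' = (\<lambda>p. fst p - snd p *\<^sub>R e) ` (S \<times> {0..1::real})"
  define h :: "nat \<Rightarrow> real" where "h k = 1 / Suc k" for k
  have h: "0 < h k" "h k \<le> 1" "filterlim h (at 0) sequentially" for k
  proof -
    show "0 < h k" "h k \<le> 1"
      by (auto simp: h_def)
    have "h \<longlonglongrightarrow> 0"
      unfolding h_def using LIMSEQ_inverse_real_of_nat by (simp add: inverse_eq_divide)
    then have "filterlim h (at_right 0) sequentially"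
      by (intro tendsto_imp_filterlim_at_right) (simp_all add: h_def)
    then show "filterlim h (at 0) sequentially"
      by (rule filterlim_mono) (auto simp: at_le)
  qed
  have "(\<lambda>k. \<integral>x. (g (x + h k *\<^sub>R e) - g x) / h k \<partial>lebesgue) \<longlonglongrightarrow> (\<integral>x. Dg x e \<partial>lebesgue)"
  proof (rule integral_dominated_convergence[where w="\<lambda>x. M * indicator S' x"])
    have "compact S'"
      unfolding S'_def by (intro compact_continuous_image compact_Times S compact_Icc)
        (auto intro!: continuous_intros)
    then show "integrable lebesgue (\<lambda>x. M * indicator S' x)"
      using lmeasurable_compact[of S'] by (auto simp: fmeasurable_def)
    show "(\<lambda>x. (g (x + h k *\<^sub>R e) - g x) / h k) \<in> borel_measurable lebesgue" for k
      by (intro borel_measurable_divide borel_measurable_diff continuous_imp_borel_measurable_lebesgue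
          continuous_on_compose2[OF g_cont] g_cont) (auto intro!: continuous_intros)
    show "(\<lambda>x. Dg x e) \<in> borel_measurable lebesgue"
      by (rule continuous_imp_borel_measurable_lebesgue[OF cont])
    show "AE x in lebesgue. (\<lambda>k. (g (x + h k *\<^sub>R e) - g x) / h k) \<longlonglongrightarrow> Dg x e"
      using tendsto_difference_quotient[OF der h(3)] by simp
    show "AE x in lebesgue. norm ((g (x + h k *\<^sub>R e) - g x) / h k) \<le> M * indicator S' x" for k
      using difference_quotient_bound[OF der M g0 h(1,2)] by (simp add: S'_def)
  qed
  moreover have "(\<lambda>k. \<integral>x. (g (x + h k *\<^sub>R e) - g x) / h k \<partial>lebesgue) = (\<lambda>k. 0)"
    by (rule ext, rule integral_difference_quotient_eq_0[OF g_cont S g0])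
  ultimately have "(\<lambda>k. 0) \<longlonglongrightarrow> (\<integral>x. Dg x e \<partial>lebesgue)"
    by (simp only:)
  then show "(\<integral>x. Dg x e \<partial>lebesgue) = 0"
    by (simp add: LIMSEQ_const_iff)
qed

lemma second_difference_mean_value:
  fixes f :: "'a::real_normed_vector \<Rightarrow> real"
  assumes Df: "\<And>y. y \<in> S \<Longrightarrow> (f has_derivative Df y) (at y)"
    and D2f: "\<And>y. y \<in> S \<Longrightarrow> ((\<lambda>y. Df y v) has_derivative D2f y) (at y)"
    and h: "h > 0"
    and in_S: "\<And>s r. 0 \<le> s \<Longrightarrow> s \<le> h \<Longrightarrow> 0 \<le> r \<Longrightarrow> r \<le> h \<Longrightarrow> x + s *\<^sub>R v + r *\<^sub>R w \<in> S"
  shows "\<exists>s r. 0 < s \<and> s < h \<and> 0 < r \<and> r < h \<and>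
     f (x + h *\<^sub>R v + h *\<^sub>R w) - f (x + h *\<^sub>R v) - f (x + h *\<^sub>R w) + f x
       = h * h * D2f (x + s *\<^sub>R v + r *\<^sub>R w) w"
proof -
  define u where "u s = f ((x + h *\<^sub>R w) + s *\<^sub>R v) - f (x + s *\<^sub>R v)" for s
  have "(u has_real_derivative (Df ((x + h *\<^sub>R w) + s *\<^sub>R v) v - Df (x + s *\<^sub>R v) v)) (at s)"
    if "0 \<le> s" "s \<le> h" for s
  proof -
    have "(x + h *\<^sub>R w) + s *\<^sub>R v \<in> S" "x + s *\<^sub>R v \<in> S"
      using in_S[of s h] in_S[of s 0] that h by (simp_all add: algebra_simps)
    then show ?thesis
      unfolding u_def by (intro DERIV_diff has_real_derivative_along_line Df)
  qed
  from MVT2[OF h this] obtain s where s: "0 < s" "s < h"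
    "u h - u 0 = (h - 0) * (Df ((x + h *\<^sub>R w) + s *\<^sub>R v) v - Df (x + s *\<^sub>R v) v)"
    by blast
  define q where "q r = Df ((x + s *\<^sub>R v) + r *\<^sub>R w) v" for r
  have "(q has_real_derivative D2f ((x + s *\<^sub>R v) + r *\<^sub>R w) w) (at r)"
    if "0 \<le> r" "r \<le> h" for r
    unfolding q_def using in_S[of s r] that s
    by (intro has_real_derivative_along_line D2f) simp
  from MVT2[OF h this] obtain r where r: "0 < r" "r < h"
    "q h - q 0 = (h - 0) * D2f ((x + s *\<^sub>R v) + r *\<^sub>R w) w"
    by blast
  have "f (x + h *\<^sub>R v + h *\<^sub>R w) - f (x + h *\<^sub>R v) - f (x + h *\<^sub>R w) + f x = u h - u 0"
    unfolding u_def by (simp add: algebra_simps)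
  also have "\<dots> = h * (q h - q 0)"
    using s(3) unfolding q_def by (simp add: algebra_simps)
  also have "\<dots> = h * h * D2f (x + s *\<^sub>R v + r *\<^sub>R w) w"
    using r(3) by simp
  finally show ?thesis
    using s r by blast
qed

lemma second_derivatives_agree_nearby:
  fixes f :: "'a::real_normed_vector \<Rightarrow> real"
  assumes Df: "\<And>y. y \<in> S \<Longrightarrow> (f has_derivative Df y) (at y)"
    and D2v: "\<And>y. y \<in> S \<Longrightarrow> ((\<lambda>y. Df y v) has_derivative D2v y) (at y)"
    and D2w: "\<And>y. y \<in> S \<Longrightarrow> ((\<lambda>y. Df y w) has_derivative D2w y) (at y)"
    and \<delta>: "\<delta> > 0" "ball x \<delta> \<subseteq> S"
  obtains y1 y2 where "dist y1 x < \<delta>" "dist y2 x < \<delta>" "D2v y1 w = D2w y2 v"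
proof -
  define h where "h = \<delta> / (2 * (norm v + norm w + 1))"
  have N: "norm v + norm w + 1 > 0"
    using norm_ge_zero[of v] norm_ge_zero[of w] by linarith
  have h: "h > 0"
    using \<delta>(1) N unfolding h_def by (intro divide_pos_pos) auto
  have near: "dist (x + s *\<^sub>R v + r *\<^sub>R w) x < \<delta>" if "0 \<le> s" "s \<le> h" "0 \<le> r" "r \<le> h" for s r
  proof -
    have "dist (x + s *\<^sub>R v + r *\<^sub>R w) x = norm (s *\<^sub>R v + r *\<^sub>R w)"
      by (simp add: dist_norm)
    also have "\<dots> \<le> s * norm v + r * norm w"
      using that by (metis abs_of_nonneg norm_scaleR norm_triangle_ineq order_refl add_mono)
    also have "\<dots> \<le> h * (norm v + norm w)"
      using that by (simp add: distrib_left add_mono mult_right_mono)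
    also have "\<dots> < h * (2 * (norm v + norm w + 1))"
      using h N by (intro mult_strict_left_mono) auto
    also have "\<dots> = \<delta>"
      unfolding h_def using N by (simp add: field_simps)
    finally show ?thesis .
  qed
  have in_S: "x + s *\<^sub>R v + r *\<^sub>R w \<in> S" "x + r *\<^sub>R w + s *\<^sub>R v \<in> S"
    if "0 \<le> s" "s \<le> h" "0 \<le> r" "r \<le> h" for s r
    using near[OF that] \<delta>(2) by (auto simp: dist_commute algebra_simps subset_iff)
  obtain s1 r1 where sr1: "0 < s1" "s1 < h" "0 < r1" "r1 < h"
    "f (x + h *\<^sub>R v + h *\<^sub>R w) - f (x + h *\<^sub>R v) - f (x + h *\<^sub>R w) + f x
       = h * h * D2v (x + s1 *\<^sub>R v + r1 *\<^sub>R w) w"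
    using second_difference_mean_value[OF Df D2v h in_S(1)] by blast
  obtain s2 r2 where sr2: "0 < s2" "s2 < h" "0 < r2" "r2 < h"
    "f (x + h *\<^sub>R w + h *\<^sub>R v) - f (x + h *\<^sub>R w) - f (x + h *\<^sub>R v) + f x
       = h * h * D2w (x + s2 *\<^sub>R w + r2 *\<^sub>R v) v"
    using second_difference_mean_value[OF Df D2w h in_S(2)] by blast
  show thesis
  proof (rule that)
    show "D2v (x + s1 *\<^sub>R v + r1 *\<^sub>R w) w = D2w (x + s2 *\<^sub>R w + r2 *\<^sub>R v) v"
      using sr1(5) sr2(5) h by (simp add: algebra_simps)
    show "dist (x + s1 *\<^sub>R v + r1 *\<^sub>R w) x < \<delta>" "dist (x + s2 *\<^sub>R w + r2 *\<^sub>R v) x < \<delta>"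
      using near[of s1 r1] near[of r2 s2] sr1 sr2 by (simp_all add: algebra_simps)
  qed
qed

lemma second_derivative_symmetric:
  fixes f :: "'a::real_normed_vector \<Rightarrow> real"
  assumes S: "open S" "x \<in> S"
    and Df: "\<And>y. y \<in> S \<Longrightarrow> (f has_derivative Df y) (at y)"
    and D2v: "\<And>y. y \<in> S \<Longrightarrow> ((\<lambda>y. Df y v) has_derivative D2v y) (at y)"
    and D2w: "\<And>y. y \<in> S \<Longrightarrow> ((\<lambda>y. Df y w) has_derivative D2w y) (at y)"
    and cont_v: "continuous (at x) (\<lambda>y. D2v y w)"
    and cont_w: "continuous (at x) (\<lambda>y. D2w y v)"
  shows "D2v x w = D2w x v"
proof (rule ccontr)
  assume "D2v x w \<noteq> D2w x v"
  then have \<epsilon>: "\<bar>D2v x w - D2w x v\<bar> / 2 > 0"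
    by simp
  obtain \<delta>1 where \<delta>1: "\<delta>1 > 0" "\<And>y. dist y x < \<delta>1 \<Longrightarrow> dist (D2v y w) (D2v x w) < \<bar>D2v x w - D2w x v\<bar> / 2"
    using cont_v \<epsilon> unfolding continuous_at_eps_delta by blast
  obtain \<delta>2 where \<delta>2: "\<delta>2 > 0" "\<And>y. dist y x < \<delta>2 \<Longrightarrow> dist (D2w y v) (D2w x v) < \<bar>D2v x w - D2w x v\<bar> / 2"
    using cont_w \<epsilon> unfolding continuous_at_eps_delta by blast
  obtain \<rho> where \<rho>: "\<rho> > 0" "ball x \<rho> \<subseteq> S"
    using S open_contains_ball by blast
  define \<delta> where "\<delta> = min \<rho> (min \<delta>1 \<delta>2)"
  have "\<delta> > 0" "ball x \<delta> \<subseteq> S"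
    using \<rho> \<delta>1(1) \<delta>2(1) by (auto simp: \<delta>_def)
  then obtain y1 y2 where y: "dist y1 x < \<delta>" "dist y2 x < \<delta>" "D2v y1 w = D2w y2 v"
    using second_derivatives_agree_nearby[OF Df D2v D2w] by metis
  then have "\<bar>D2v y1 w - D2v x w\<bar> < \<bar>D2v x w - D2w x v\<bar> / 2" "\<bar>D2v y1 w - D2w x v\<bar> < \<bar>D2v x w - D2w x v\<bar> / 2"
    using \<delta>1(2)[of y1] \<delta>2(2)[of y2] by (auto simp: \<delta>_def dist_real_def)
  moreover have "\<bar>D2v x w - D2w x v\<bar> \<le> \<bar>D2v y1 w - D2w x v\<bar> + \<bar>D2v y1 w - D2v x w\<bar>"
    using abs_triangle_ineq4[of "D2v y1 w - D2w x v" "D2v y1 w - D2v x w"] by simp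
  ultimately show False
    by argo
qed

lemma has_real_derivative_glue:
  fixes f g h :: "real \<Rightarrow> real"
  assumes "\<And>s. a - 1 < s \<Longrightarrow> s \<le> a \<Longrightarrow> f s = g s" "\<And>s. a \<le> s \<Longrightarrow> s < a + 1 \<Longrightarrow> f s = h s"
    and "(g has_real_derivative D) (at a)" "(h has_real_derivative D) (at a)"
  shows "(f has_real_derivative D) (at a)"
proof -
  have fa: "f a = g a" "f a = h a"
    using assms(1)[of a] assms(2)[of a] by auto
  have L: "((\<lambda>y. (g y - g a) / (y - a)) \<longlongrightarrow> D) (at a)"
    and R: "((\<lambda>y. (h y - h a) / (y - a)) \<longlongrightarrow> D) (at a)"
    using assms(3,4) by (simp_all add: has_field_derivative_iff)
  have "((\<lambda>y. (f y - f a) / (y - a)) \<longlongrightarrow> D) (at_left a)"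
  proof (rule Lim_transform_eventually[OF tendsto_mono[OF at_le L]])
    show "\<forall>\<^sub>F y in at_left a. (g y - g a) / (y - a) = (f y - f a) / (y - a)"
      using fa by (auto simp: eventually_at_left_field assms(1) intro!: exI[of _ "a - 1"])
  qed simp
  moreover have "((\<lambda>y. (f y - f a) / (y - a)) \<longlongrightarrow> D) (at_right a)"
  proof (rule Lim_transform_eventually[OF tendsto_mono[OF at_le R]])
    show "\<forall>\<^sub>F y in at_right a. (h y - h a) / (y - a) = (f y - f a) / (y - a)"
      using fa by (auto simp: eventually_at_right_field assms(2) intro!: exI[of _ "a + 1"])
  qed simp
  ultimately show ?thesis
    by (simp add: has_field_derivative_iff filterlim_split_at)
qed

lemma has_derivative_inverse_powr:
  fixes f :: "'a::real_normed_vector \<Rightarrow> real"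
  assumes "f x > 0" "(f has_derivative Df) (at x)"
  shows "((\<lambda>y. 1 / f y powr c) has_derivative (\<lambda>w. - c / f x powr (c + 1) * Df w)) (at x)"
proof -
  have "((\<lambda>s. s powr (- c)) has_real_derivative - c * f x powr (- c - 1)) (at (f x))"
    by (rule has_real_derivative_powr[OF assms(1)])
  moreover have "f x powr (- c - 1) = 1 / f x powr (c + 1)"
    by (simp add: powr_minus_divide[symmetric])
  ultimately have "((\<lambda>s. 1 / s powr c) has_real_derivative - c / f x powr (c + 1)) (at (f x))"
    by (simp add: powr_minus_divide)
  from DERIV_compose_FDERIV[OF this assms(2)] show ?thesis
    by (simp add: mult.commute)
qed

lemma bounded_bilinear_image:
  assumes "bounded_bilinear bil" "bounded (f ` S)" "bounded (g ` S)"
  shows "bounded ((\<lambda>x. bil (f x) (g x)) ` S)"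
proof -
  obtain Mf Mg where Mf: "\<forall>x\<in>S. norm (f x) \<le> Mf" and Mg: "\<forall>x\<in>S. norm (g x) \<le> Mg"
    using assms(2,3) unfolding bounded_iff by auto
  obtain K where K: "\<And>a b. norm (bil a b) \<le> norm a * norm b * K" "K \<ge> 0"
    using bounded_bilinear.nonneg_bounded[OF assms(1)] by blast
  have "norm (bil (f x) (g x)) \<le> Mf * Mg * K" if "x \<in> S" for x
  proof -
    have f: "norm (f x) \<le> Mf" and g: "norm (g x) \<le> Mg"
      using Mf Mg that by auto
    have "norm (bil (f x) (g x)) \<le> norm (f x) * norm (g x) * K"
      by (rule K(1))
    also have "\<dots> \<le> Mf * Mg * K"
      by (rule mult_right_mono[OF mult_mono[OF f g order_trans[OF norm_ge_zero f] norm_ge_zero] K(2)])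
    finally show ?thesis .
  qed
  then show ?thesis
    unfolding bounded_iff by blast
qed

section \<open>Skew-symmetric matrices\<close>

lemma skew_inner_left:
  fixes A :: "real^'m::finite^'m"
  assumes "transpose A = - A"
  shows "(A *v u) \<bullet> v = - (u \<bullet> (A *v v))"
proof -
  have "u \<bullet> (A *v v) = (u v* A) \<bullet> v"
    by (simp add: dot_lmul_matrix)
  also have "u v* A = transpose A *v u"
    by (metis transpose_transpose vector_transpose_matrix)
  also have "\<dots> = - (A *v u)"
    using assms by (simp add: matrix_vector_mult_def vec_eq_iff sum_negf)
  finally show ?thesis
    by simp
qed

lemma skew_inner_self:
  fixes A :: "real^'m::finite^'m"
  assumes "transpose A = - A"
  shows "u \<bullet> (A *v u) = 0"
  using skew_inner_left[OF assms, of u u] by (simp add: inner_commute)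

lemma skew_sum_symmetric_eq_0:
  fixes A :: "real^'m::finite^'m"
  assumes "transpose A = - A" and Q: "\<And>i j. Q i j = Q j i"
  shows "(\<Sum>i\<in>UNIV. \<Sum>j\<in>UNIV. A $ i $ j * Q i j) = 0"
proof -
  let ?S = "\<Sum>i\<in>UNIV. \<Sum>j\<in>UNIV. A $ i $ j * Q i j"
  have "?S = (\<Sum>j\<in>UNIV. \<Sum>i\<in>UNIV. A $ i $ j * Q i j)"
    by (rule sum.swap)
  also have "\<dots> = (\<Sum>j\<in>UNIV. \<Sum>i\<in>UNIV. - (A $ j $ i * Q j i))"
  proof (intro sum.cong refl)
    fix i j
    show "A $ i $ j * Q i j = - (A $ j $ i * Q j i)"
      using arg_cong[OF assms(1), of "\<lambda>M. M $ j $ i"] Q[of i j] by (simp add: transpose_def)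
  qed
  also have "\<dots> = - ?S"
    by (simp add: sum_negf)
  finally show ?thesis
    by simp
qed

lemma matrix_inv_of_trivial_kernel:
  fixes B :: "real^'m::finite^'m"
  assumes "\<forall>x. B *v x = 0 \<longrightarrow> x = 0"
  shows "matrix_inv B ** B = mat 1" and "B ** matrix_inv B = mat 1"
proof -
  obtain A where "A ** B = mat 1"
    using matrix_left_invertible_ker[of B] assms by blast
  then have "\<exists>A. B ** A = mat 1 \<and> A ** B = mat 1"
    using matrix_left_right_inverse by blast
  then have "B ** matrix_inv B = mat 1 \<and> matrix_inv B ** B = mat 1"
    unfolding matrix_inv_def by (rule someI_ex)
  then show "matrix_inv B ** B = mat 1" "B ** matrix_inv B = mat 1"
    by auto
qed

lemma transpose_matrix_inv_skew:
  fixes B :: "real^'m::finite^'m"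
  assumes skew: "transpose B = - B" and ker: "\<forall>x. B *v x = 0 \<longrightarrow> x = 0"
  shows "transpose (matrix_inv B) = - matrix_inv B"
proof -
  let ?C = "matrix_inv B"
  have BC: "B *v (?C *v h) = h" for h
    by (simp add: matrix_vector_mul_assoc matrix_inv_of_trivial_kernel(2)[OF ker])
  have inner: "(?C *v u) \<bullet> v = - (u \<bullet> (?C *v v))" for u v
    using skew_inner_left[OF skew, of "?C *v u" "?C *v v"] by (simp add: BC)
  have entry: "?C $ j $ i = - ?C $ i $ j" for i j
    using inner[of "axis i 1" "axis j 1"]
    by (simp add: matrix_vector_mult_basis column_def inner_axis inner_axis')
  have "transpose ?C $ i $ j = (- ?C) $ i $ j" for i j
    unfolding transpose_def using entry[of i j] by simp
  then show ?thesis
    by (simp add: vec_eq_iff)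
qed

lemma sum_matrix_inv_mult_transpose:
  fixes B :: "real^'m::finite^'m"
  assumes "\<forall>x. B *v x = 0 \<longrightarrow> x = 0"
  shows "(\<Sum>i\<in>UNIV. \<Sum>j\<in>UNIV. matrix_inv B $ i $ j * B $ j $ i) = real CARD('m)"
proof -
  have "(\<Sum>i\<in>UNIV. \<Sum>j\<in>UNIV. matrix_inv B $ i $ j * B $ j $ i) = trace (matrix_inv B ** B)"
    by (simp add: trace_def matrix_matrix_mult_def)
  then show ?thesis
    by (simp add: matrix_inv_of_trivial_kernel(1)[OF assms] trace_I)
qed

section \<open>A cut-off near the vertical line\<close>

text \<open>The cubic \<open>3c\<^sup>2 - 2c\<^sup>3\<close> has zero slope at \<open>c = 0\<close> and \<open>c = 1\<close>, so composing it with
  the ramp gives a \<open>C\<^sup>1\<close> step from 0 (for \<open>s \<le> 1\<close>) to 1 (for \<open>s \<ge> 2\<close>).\<close>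

definition ramp :: "real \<Rightarrow> real" where
  "ramp s = max 0 (min 1 (s - 1))"

definition smoothstep :: "real \<Rightarrow> real" where
  "smoothstep s = 3 * (ramp s)\<^sup>2 - 2 * (ramp s)^3"

definition smoothstep' :: "real \<Rightarrow> real" where
  "smoothstep' s = 6 * ramp s - 6 * (ramp s)\<^sup>2"

lemma ramp_simps: "s \<le> 1 \<Longrightarrow> ramp s = 0" "1 \<le> s \<Longrightarrow> s \<le> 2 \<Longrightarrow> ramp s = s - 1" "2 \<le> s \<Longrightarrow> ramp s = 1"
  by (auto simp: ramp_def)

lemma smoothstep_eq_0: "s \<le> 1 \<Longrightarrow> smoothstep s = 0" "s \<le> 1 \<Longrightarrow> smoothstep' s = 0"
  by (auto simp: smoothstep_def smoothstep'_def ramp_simps)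

lemma smoothstep_eq_1: "2 \<le> s \<Longrightarrow> smoothstep s = 1" "2 \<le> s \<Longrightarrow> smoothstep' s = 0"
  by (auto simp: smoothstep_def smoothstep'_def ramp_simps)

lemma has_real_derivative_smoothstep: "(smoothstep has_real_derivative smoothstep' s) (at s)"
proof -
  define p where "p s = 3 * (s - 1)\<^sup>2 - 2 * (s - 1)^3" for s :: real
  have p: "(p has_real_derivative (6 * (s - 1) - 6 * (s - 1)\<^sup>2)) (at s)" for s
    unfolding p_def by (auto intro!: derivative_eq_intros simp: power2_eq_square)
  consider "s < 1" | "s = 1" | "1 < s" "s < 2" | "s = 2" | "2 < s"
    by linarith
  then show ?thesis
  proof cases
    case 1
    have "(smoothstep has_real_derivative 0) (at s)"
      by (rule has_field_derivative_transform_within_open[where S="{..<1}" and f="\<lambda>_. 0"])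
        (use 1 in \<open>auto simp: smoothstep_eq_0\<close>)
    then show ?thesis
      using 1 by (simp add: smoothstep_eq_0)
  next
    case 2
    have "(smoothstep has_real_derivative 0) (at 1)"
      by (rule has_real_derivative_glue[where g="\<lambda>_. 0" and h=p])
        (use p[of 1] in \<open>auto simp: smoothstep_def p_def ramp_def\<close>)
    then show ?thesis
      using 2 by (simp add: smoothstep_eq_0)
  next
    case 3
    have "(smoothstep has_real_derivative (6 * (s - 1) - 6 * (s - 1)\<^sup>2)) (at s)"
      by (rule has_field_derivative_transform_within_open[where S="{1<..<2}" and f=p, OF p])
        (use 3 in \<open>auto simp: smoothstep_def p_def ramp_simps\<close>)
    then show ?thesis
      using 3 by (simp add: smoothstep'_def ramp_simps)
  next
    case 4
    have "(smoothstep has_real_derivative 0) (at 2)"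
      by (rule has_real_derivative_glue[where g=p and h="\<lambda>_. 1"])
        (use p[of 2] in \<open>auto simp: smoothstep_def p_def ramp_def\<close>)
    then show ?thesis
      using 4 by (simp add: smoothstep_eq_1)
  next
    case 5
    have "(smoothstep has_real_derivative 0) (at s)"
      by (rule has_field_derivative_transform_within_open[where S="{2<..}" and f="\<lambda>_. 1"])
        (use 5 in \<open>auto simp: smoothstep_eq_1\<close>)
    then show ?thesis
      using 5 by (simp add: smoothstep_eq_1)
  qed
qed

lemma continuous_on_smoothstep [continuous_intros]:
  "continuous_on S f \<Longrightarrow> continuous_on S (\<lambda>x. smoothstep (f x))"
  "continuous_on S f \<Longrightarrow> continuous_on S (\<lambda>x. smoothstep' (f x))"
  unfolding smoothstep_def smoothstep'_def ramp_def by (intro continuous_intros; assumption)+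

lemma smoothstep_range: "0 \<le> smoothstep s" "smoothstep s \<le> 1"
proof -
  let ?c = "ramp s"
  have c: "0 \<le> ?c" "?c \<le> 1"
    by (auto simp: ramp_def)
  have "smoothstep s = ?c\<^sup>2 * (3 - 2 * ?c)"
    by (simp add: smoothstep_def power2_eq_square power3_eq_cube algebra_simps)
  then show "0 \<le> smoothstep s"
    using c by simp
  have "1 - smoothstep s = (1 - ?c)\<^sup>2 * (1 + 2 * ?c)"
    by (simp add: smoothstep_def power2_eq_square power3_eq_cube algebra_simps)
  then show "smoothstep s \<le> 1"
    using c by (metis diff_ge_0_iff_ge mult_nonneg_nonneg zero_le_power2 add_nonneg_nonneg zero_le_one mult_2)
qed

lemma abs_smoothstep'_le: "\<bar>smoothstep' s\<bar> \<le> 2"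
proof -
  let ?c = "ramp s"
  have "0 \<le> ?c" "?c \<le> 1"
    by (auto simp: ramp_def)
  then have "0 \<le> ?c * (1 - ?c)"
    by simp
  moreover have "?c * (1 - ?c) \<le> 1/4"
    using zero_le_power2[of "?c - 1/2"] by (simp add: power2_eq_square algebra_simps)
  moreover have "smoothstep' s = 6 * (?c * (1 - ?c))"
    by (simp add: smoothstep'_def power2_eq_square algebra_simps)
  ultimately show ?thesis
    by simp
qed

definition cutoff :: "real \<Rightarrow> 'b::real_inner \<times> real \<Rightarrow> real" where
  "cutoff r x = smoothstep ((fst x \<bullet> fst x) / r\<^sup>2)"

definition cutoff_grad :: "real \<Rightarrow> 'b::real_inner \<times> real \<Rightarrow> 'b" where
  "cutoff_grad r x = (smoothstep' ((fst x \<bullet> fst x) / r\<^sup>2) * 2 / r\<^sup>2) *\<^sub>R fst x"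

lemma has_derivative_cutoff: "(cutoff r has_derivative (\<lambda>w. cutoff_grad r x \<bullet> fst w)) (at x)"
proof -
  have "((\<lambda>x. (fst x \<bullet> fst x) * inverse (r\<^sup>2)) has_derivative
      (\<lambda>w. (fst w \<bullet> fst x + fst x \<bullet> fst w) * inverse (r\<^sup>2))) (at x)"
    by (intro has_derivative_mult_left) (auto intro!: derivative_eq_intros)
  from DERIV_compose_FDERIV[OF has_real_derivative_smoothstep this]
  show ?thesis
    unfolding cutoff_def[abs_def] cutoff_grad_def divide_inverse
    by (rule has_derivative_eq_rhs) (auto simp: fun_eq_iff inner_commute algebra_simps)
qed

lemma continuous_on_cutoff: "continuous_on S (cutoff r)" "continuous_on S (cutoff_grad r)"
  unfolding cutoff_def[abs_def] cutoff_grad_def[abs_def] divide_inverse by (intro continuous_intros)+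

lemma cutoff_near_Lline:
  assumes "norm (fst x) < r"
  shows "cutoff r x = 0"
proof -
  have "fst x \<bullet> fst x \<le> r\<^sup>2"
    using assms by (metis norm_ge_zero power2_norm_eq_inner power_mono less_imp_le)
  moreover have "r > 0"
    using assms by (meson norm_ge_zero le_less_trans)
  ultimately show ?thesis
    by (simp add: cutoff_def smoothstep_eq_0)
qed

lemma cutoff_far_from_Lline:
  assumes "r > 0" "2 * r \<le> norm (fst x)"
  shows "cutoff r x = 1" "cutoff_grad r x = 0"
proof -
  have "2 * r\<^sup>2 \<le> (2 * r)\<^sup>2"
    by (simp add: power2_eq_square)
  also have "\<dots> \<le> fst x \<bullet> fst x"
    using assms by (metis power2_norm_eq_inner power_mono less_eq_real_def mult_pos_pos zero_less_numeral)
  finally have "2 \<le> (fst x \<bullet> fst x) / r\<^sup>2"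
    using assms by (simp add: field_simps)
  then show "cutoff r x = 1" "cutoff_grad r x = 0"
    by (simp_all add: cutoff_def cutoff_grad_def smoothstep_eq_1)
qed

lemma abs_cutoff_mult_le: "\<bar>cutoff r x * y\<bar> \<le> \<bar>y\<bar>"
proof -
  have "\<bar>cutoff r x\<bar> \<le> 1"
    using smoothstep_range by (simp add: cutoff_def)
  then show ?thesis
    unfolding abs_mult by (rule mult_left_le_one_le[OF abs_ge_zero abs_ge_zero])
qed

lemma norm_cutoff_grad_le:
  assumes "r > 0"
  shows "norm (cutoff_grad r x) \<le> 8 / r"
proof (cases "2 * r \<le> norm (fst x)")
  case True
  then show ?thesis
    using cutoff_far_from_Lline[OF assms True] assms by simp
next
  case False
  have "norm (cutoff_grad r x) = \<bar>smoothstep' ((fst x \<bullet> fst x) / r\<^sup>2)\<bar> * 2 / r\<^sup>2 * norm (fst x)"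
    by (simp add: cutoff_grad_def abs_mult)
  also have "\<dots> \<le> 2 * 2 / r\<^sup>2 * (2 * r)"
    using False abs_smoothstep'_le assms by (intro mult_mono divide_right_mono) auto
  also have "\<dots> = 8 / r"
    using assms by (simp add: power2_eq_square field_simps)
  finally show ?thesis .
qed

lemma mem_Lline [simp]: "x \<in> Lline \<longleftrightarrow> fst x = 0"
  by (simp add: Lline_def)

lemma closed_Lline: "closed Lline"
  unfolding Lline_def by (intro closed_Collect_eq continuous_intros)

lemma Lline_null_sets: "(Lline :: ((real^'m::finite) \<times> real) set) \<in> null_sets lebesgue"
proof -
  obtain i :: 'm where True
    by blast
  have "negligible {x :: (real^'m) \<times> real. (axis i 1, 0) \<bullet> x = 0}"
    by (rule negligible_hyperplane) (simp add: zero_prod_def axis_eq_0_iff)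
  moreover have "Lline \<subseteq> {x :: (real^'m) \<times> real. (axis i 1, 0) \<bullet> x = 0}"
    by (auto simp: inner_prod_def)
  ultimately show ?thesis
    by (simp add: negligible_iff_null_sets[symmetric] negligible_subset)
qed

lemma borel_measurable_continuous_off_Lline:
  fixes h :: "(real^'m::finite) \<times> real \<Rightarrow> real"
  assumes "continuous_on (- Lline) h"
  shows "h \<in> borel_measurable lebesgue"
proof -
  let ?g = "\<lambda>x. if x \<in> - Lline then h x else 0"
  have "?g \<in> borel_measurable borel"
    using assms closed_Lline by (intro borel_measurable_continuous_on_if borel_open open_Compl continuous_on_const)
  then have "?g \<in> borel_measurable lebesgue"
    using measurable_completion[of ?g lborel borel] by simp
  moreover have "AE x in lebesgue. ?g x = h x"
    using AE_not_in[OF Lline_null_sets] by eventually_elim auto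
  ultimately show ?thesis
    using borel_measurable_AE by blast
qed

lemma integrable_continuous_off_Lline:
  fixes h :: "(real^'m::finite) \<times> real \<Rightarrow> real"
  assumes "continuous_on (- Lline) h" "compact K" "\<And>x. x \<notin> K \<Longrightarrow> h x = 0"
    and "\<And>x. x \<in> K - Lline \<Longrightarrow> \<bar>h x\<bar> \<le> M"
  shows "integrable lebesgue h"
proof (rule integrable_bounded_compact_support[OF borel_measurable_continuous_off_Lline[OF assms(1)] assms(2,3)])
  show "AE x in lebesgue. \<bar>h x\<bar> \<le> max M 0"
    using AE_not_in[OF Lline_null_sets]
  proof eventually_elim
    case (elim x)
    then show ?case
      using assms(3,4)[of x] by (cases "x \<in> K") auto
  qed
qed

lemma continuous_on_vanishing_near_Lline:
  assumes "continuous_on (- Lline) f" "open U" "Lline \<subseteq> U" "\<And>x. x \<in> U \<Longrightarrow> f x = 0"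
  shows "continuous_on UNIV f"
proof -
  have "continuous_on U f"
    by (rule continuous_on_eq[OF continuous_on_const[of U 0]]) (use assms(4) in auto)
  then have "continuous_on (- Lline \<union> U) f"
    using assms(1,2) closed_Lline by (intro continuous_on_open_Un) auto
  moreover have "- Lline \<union> U = UNIV"
    using assms(3) by blast
  ultimately show ?thesis
    by simp
qed

lemma bounded_continuous_off_origin:
  assumes "continuous_on (- {0}) f" "compact K" "K \<subseteq> - {0}"
  shows "bounded (f ` (K - Lline))"
proof -
  have "bounded (f ` K)"
    by (intro compact_imp_bounded compact_continuous_image continuous_on_subset[OF assms(1,3)] assms(2))
  then show ?thesis
    by (rule bounded_subset) auto
qed

lemma tendsto_integral_cutoff:
  fixes G :: "(real^'m::finite) \<times> real \<Rightarrow> real"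
  assumes G: "integrable lebesgue G" and r: "\<And>k. r k > 0" "r \<longlonglongrightarrow> 0"
  shows "(\<lambda>k. \<integral>x. cutoff (r k) x * G x \<partial>lebesgue) \<longlonglongrightarrow> (\<integral>x. G x \<partial>lebesgue)"
proof (rule integral_dominated_convergence[where w="\<lambda>x. \<bar>G x\<bar>"])
  show "AE x in lebesgue. (\<lambda>k. cutoff (r k) x * G x) \<longlonglongrightarrow> G x"
    using AE_not_in[OF Lline_null_sets]
  proof eventually_elim
    case (elim x)
    then have "norm (fst x) / 2 > 0"
      by simp
    with r(2) have "\<forall>\<^sub>F k in sequentially. r k < norm (fst x) / 2"
      by (rule order_tendstoD)
    then have "\<forall>\<^sub>F k in sequentially. cutoff (r k) x * G x = G x"
      by eventually_elim (simp add: cutoff_far_from_Lline r(1))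
    then show ?case
      by (rule tendsto_eventually)
  qed
  show "AE x in lebesgue. norm (cutoff (r k) x * G x) \<le> \<bar>G x\<bar>" for k
    by (simp add: abs_cutoff_mult_le)
  show "(\<lambda>x. cutoff (r k) x * G x) \<in> borel_measurable lebesgue" for k
    using G by (intro borel_measurable_times continuous_imp_borel_measurable_lebesgue continuous_on_cutoff
        borel_measurable_integrable)
qed (use G in \<open>auto intro: borel_measurable_integrable\<close>)

lemma integrable_cutoff_mult:
  fixes G :: "(real^'m::finite) \<times> real \<Rightarrow> real"
  assumes G: "integrable lebesgue G"
  shows "integrable lebesgue (\<lambda>x. cutoff r x * G x)"
proof (rule Bochner_Integration.integrable_bound[OF G])
  show "(\<lambda>x. cutoff r x * G x) \<in> borel_measurable lebesgue"
    using G by (intro borel_measurable_times continuous_imp_borel_measurable_lebesgue continuous_on_cutoff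
        borel_measurable_integrable)
  show "AE x in lebesgue. norm (cutoff r x * G x) \<le> norm (G x)"
    by (simp add: abs_cutoff_mult_le)
qed

lemma measure_cbox_Lline_nbhd:
  assumes "a \<ge> 0" "R \<ge> 0"
  shows "measure lebesgue (cbox ((\<chi> i. - a, - R) :: (real^'m::finite) \<times> real) (\<chi> i. a, R))
          = (2 * a) ^ CARD('m) * (2 * R)"
proof -
  have "0 \<in> cbox ((\<chi> i. - a) :: real^'m) (\<chi> i. a)"
    using assms by (simp add: mem_box_cart)
  then have "cbox ((\<chi> i. - a) :: real^'m) (\<chi> i. a) \<noteq> {}"
    by blast
  then have "measure lborel (cbox ((\<chi> i. - a) :: real^'m) (\<chi> i. a)) = (2 * a) ^ CARD('m)"
    by (simp add: content_cbox_cart)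
  moreover have "measure lborel (cbox (- R) R) = 2 * R"
    using assms by simp
  ultimately show ?thesis
    by (simp add: measure_completion content_Pair)
qed

lemma mem_cbox_Lline_nbhd:
  assumes "norm (fst x) \<le> a" "\<bar>snd x\<bar> \<le> R"
  shows "x \<in> cbox ((\<chi> i. - a, - R) :: (real^'m::finite) \<times> real) (\<chi> i. a, R)"
proof -
  have "- a \<le> fst x $ i \<and> fst x $ i \<le> a" for i
    using assms(1) abs_le_D1 abs_le_D2 component_le_norm_cart[of "fst x" i] by fastforce
  then have "fst x \<in> cbox (\<chi> i. - a) (\<chi> i. a)"
    by (simp add: mem_box_cart)
  then show ?thesis
    using assms(2) unfolding cbox_Pair_eq by (simp add: mem_Times_iff abs_le_iff)
qed

lemma integral_cutoff_grad_le:
  fixes W :: "(real^'m::finite) \<times> real \<Rightarrow> real^'m"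
  assumes int: "integrable lebesgue (\<lambda>x. W x \<bullet> cutoff_grad r x)"
    and r: "0 < r" "r \<le> 1" and card: "CARD('m) \<ge> 2" and MR: "0 \<le> M" "0 \<le> R"
    and W_bound: "AE x in lebesgue. norm (W x) \<le> M" and W_supp: "\<And>x. W x \<noteq> 0 \<Longrightarrow> \<bar>snd x\<bar> \<le> R"
  shows "\<bar>\<integral>x. W x \<bullet> cutoff_grad r x \<partial>lebesgue\<bar> \<le> 8 * M * 4 ^ CARD('m) * (2 * R) * r"
proof -
  define box where "box = cbox ((\<chi> i. - (2 * r), - R) :: (real^'m) \<times> real) (\<chi> i. 2 * r, R)"
  \<comment> \<open>\<open>\<nabla>\<chi>\<^sub>r\<close> is of size \<open>1/r\<close> and supported in a box of volume \<open>O(r\<^sup>m)\<close> around \<open>L\<close>.\<close>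
  have bound: "AE x in lebesgue. \<bar>W x \<bullet> cutoff_grad r x\<bar> \<le> 8 * M / r * indicator box x"
    using W_bound
  proof eventually_elim
    case (elim x)
    show ?case
    proof (cases "W x \<noteq> 0 \<and> cutoff_grad r x \<noteq> 0")
      case True
      then have "norm (fst x) \<le> 2 * r"
        using cutoff_far_from_Lline(2)[OF r(1), of x] by force
      then have "x \<in> box"
        unfolding box_def using True W_supp by (intro mem_cbox_Lline_nbhd) auto
      moreover have "\<bar>W x \<bullet> cutoff_grad r x\<bar> \<le> M * (8 / r)"
        using Cauchy_Schwarz_ineq2[of "W x" "cutoff_grad r x"] elim norm_cutoff_grad_le[OF r(1), of x]
        by (smt (verit, ccfv_SIG) mult_mono norm_ge_zero)
      ultimately show ?thesis
        by (simp add: mult.commute)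
    next
      case False
      then show ?thesis
        using MR r(1) by auto
    qed
  qed
  have "box \<in> lmeasurable"
    unfolding box_def by (rule lmeasurable_cbox)
  then have box_int: "integrable lebesgue (\<lambda>x. 8 * M / r * indicator box x)"
    by (intro integrable_mult_right integrable_real_indicator) (auto simp: fmeasurable_def)
  have "\<bar>\<integral>x. W x \<bullet> cutoff_grad r x \<partial>lebesgue\<bar> \<le> (\<integral>x. \<bar>W x \<bullet> cutoff_grad r x\<bar> \<partial>lebesgue)"
    by (rule integral_abs_bound)
  also have "\<dots> \<le> (\<integral>x. 8 * M / r * indicator box x \<partial>lebesgue)"
    by (rule integral_mono_AE[OF integrable_abs[OF int] box_int bound])
  also have "\<dots> = 8 * M / r * (4 * r) ^ CARD('m) * (2 * R)"
    using measure_cbox_Lline_nbhd[of "2 * r" R, where 'm='m] r MR by (simp add: box_def)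
  also have "\<dots> = 8 * M * 4 ^ CARD('m) * (2 * R) * r ^ (CARD('m) - 1)"
    using r(1) card by (simp add: power_mult_distrib power_diff)
  also have "\<dots> \<le> 8 * M * 4 ^ CARD('m) * (2 * R) * r"
    using r card MR by (intro mult_left_mono power_decreasing[of 1, simplified]) auto
  finally show ?thesis .
qed

section \<open>Horizontal vector fields\<close>

text \<open>The horizontal field \<open>X\<^sub>i\<close> at \<open>x = (z, t)\<close> as a tangent vector of \<open>\<real>\<^sup>m \<times> \<real>\<close>:
  \<open>X\<^sub>i f x = Df x (horiz B i x)\<close>.\<close>

definition horiz :: "real^'m^'m \<Rightarrow> 'm \<Rightarrow> (real^'m::finite) \<times> real \<Rightarrow> (real^'m) \<times> real" where
  "horiz B i x = (axis i 1, (B *v fst x) $ i / 2)"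

lemma linear_horiz:
  assumes "linear D"
  shows "D (horiz B i x) = D (axis i 1, 0) + (B *v fst x) $ i / 2 * D (0, 1)"
proof -
  have "D (horiz B i x) = D ((axis i 1, 0) + ((B *v fst x) $ i / 2) *\<^sub>R (0, 1))"
    by (simp add: horiz_def)
  then show ?thesis
    by (simp only: linear_add[OF assms] linear_scale[OF assms] real_scaleR_def)
qed

lemma hgrad_eq_horiz:
  assumes "(f has_derivative Df) (at x)"
  shows "hgrad B f x $ i = Df (horiz B i x)"
  using frechet_derivative_at[OF assms] linear_horiz[OF has_derivative_linear[OF assms]]
  by (simp add: hgrad_def dz_def dt_def)

lemma bounded_linear_Bz: "bounded_linear (\<lambda>x :: (real^'m::finite) \<times> real. (B *v fst x) $ i)"
  by (intro bounded_linear_compose[OF bounded_linear_vec_nth]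
      bounded_linear_compose[OF matrix_vector_mul_bounded_linear] bounded_linear_fst)

lemma has_derivative_Bz: "((\<lambda>x :: (real^'m::finite) \<times> real. (B *v fst x) $ i) has_derivative (\<lambda>w. (B *v fst w) $ i)) F"
  by (rule bounded_linear_imp_has_derivative[OF bounded_linear_Bz])

lemmas continuous_on_Bz [continuous_intros] = linear_continuous_on[OF bounded_linear_Bz]

lemma hgrad_mult_cutoff:
  assumes "(\<phi> has_derivative D\<phi>) (at x)"
  shows "hgrad B (\<lambda>y. \<phi> y * cutoff r y) x = cutoff r x *\<^sub>R hgrad B \<phi> x + \<phi> x *\<^sub>R cutoff_grad r x"
proof -
  have "((\<lambda>y. \<phi> y * cutoff r y) has_derivative (\<lambda>w. \<phi> x * (cutoff_grad r x \<bullet> fst w) + D\<phi> w * cutoff r x)) (at x)"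
    by (rule has_derivative_mult[OF assms has_derivative_cutoff])
  then show ?thesis
    by (simp add: vec_eq_iff hgrad_eq_horiz[OF assms] hgrad_eq_horiz[of _ _ x] horiz_def inner_axis)
qed

lemma continuous_on_hgrad:
  assumes "\<And>x. (f has_derivative Df x) (at x)" "\<And>v. continuous_on UNIV (\<lambda>x. Df x v)"
  shows "continuous_on UNIV (hgrad B f)"
proof -
  have "hgrad B f = (\<lambda>x. \<chi> i. Df x (axis i 1, 0) + (B *v fst x) $ i / 2 * Df x (0, 1))"
    using hgrad_eq_horiz[OF assms(1)] linear_horiz[OF has_derivative_linear[OF assms(1)]]
    by (simp add: fun_eq_iff vec_eq_iff)
  then show ?thesis
    by (simp add: continuous_on_vec_lambda continuous_intros assms(2))
qed

lemma test_fun_C1: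
  assumes "test_fun U \<phi>"
  shows "(\<phi> has_derivative frechet_derivative \<phi> (at x)) (at x)"
    and "continuous_on UNIV (\<lambda>x. frechet_derivative \<phi> (at x) v)"
    and "continuous_on UNIV \<phi>"
proof -
  have C1: "Ck_on (Suc 0) UNIV \<phi>"
    using assms unfolding test_fun_def smooth_on_def by blast
  show der: "(\<phi> has_derivative frechet_derivative \<phi> (at x)) (at x)" for x
    by (rule Ck_on_SucD(1)[OF C1]) simp
  show "continuous_on UNIV (\<lambda>x. frechet_derivative \<phi> (at x) v)"
    using Ck_on_SucD(2)[OF C1] by simp
  show "continuous_on UNIV \<phi>"
    by (intro continuous_at_imp_continuous_on ballI has_derivative_continuous[OF der])
qed

lemma test_funE:
  assumes "test_fun U \<phi>"
  obtains K where "compact K" "K \<subseteq> U" "\<And>x. x \<notin> K \<Longrightarrow> \<phi> x = 0" "\<And>x. x \<notin> K \<Longrightarrow> hgrad B \<phi> x = 0"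
proof -
  let ?K = "closure {x. \<phi> x \<noteq> 0}"
  have K: "compact ?K" "?K \<subseteq> U"
    using assms unfolding test_fun_def by blast+
  have \<phi>0: "\<phi> x = 0" if "x \<notin> ?K" for x
    using that closure_subset[of "{x. \<phi> x \<noteq> 0}"] by auto
  have "hgrad B \<phi> x = 0" if "x \<notin> ?K" for x
    using hgrad_eq_horiz[OF has_derivative_zero_outside_closed[OF closed_closure that \<phi>0]]
    by (simp add: vec_eq_iff)
  from that[OF K \<phi>0 this] show ?thesis .
qed

lemma integral_hdiv_compact_support_eq_0:
  fixes W :: "(real^'m::finite) \<times> real \<Rightarrow> real^'m"
  assumes der: "\<And>i x. ((\<lambda>y. W y $ i) has_derivative DW i x) (at x)"
    and cont: "\<And>i v. continuous_on UNIV (\<lambda>x. DW i x v)"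
    and S: "compact S" and W0: "\<And>x. x \<notin> S \<Longrightarrow> W x = 0"
  shows "integrable lebesgue (\<lambda>x. \<Sum>i\<in>UNIV. DW i x (horiz B i x))"
    and "(\<integral>x. (\<Sum>i\<in>UNIV. DW i x (horiz B i x)) \<partial>lebesgue) = 0"
proof -
  have "integrable lebesgue (\<lambda>x. DW i x (horiz B i x)) \<and> (\<integral>x. DW i x (horiz B i x) \<partial>lebesgue) = 0" for i
  proof -
    \<comment> \<open>\<open>\<partial>\<^sub>t\<close> commutes with multiplication by \<open>(Bz)\<^sub>i\<close>, so \<open>X\<^sub>i g = \<partial>g/\<partial>z\<^sub>i + \<partial>\<^sub>t ((Bz)\<^sub>i g / 2)\<close>.\<close>
    define h where "h x = (B *v fst x) $ i / 2 * W x $ i" for x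
    define Dh where "Dh x w = (B *v fst w) $ i / 2 * W x $ i + (B *v fst x) $ i / 2 * DW i x w" for x w
    have h_der: "(h has_derivative Dh x) (at x)" for x
      unfolding h_def[abs_def] Dh_def
      by (rule has_derivative_eq_rhs[OF has_derivative_mult[OF has_derivative_divide'[OF has_derivative_Bz has_derivative_const] der]])
        (auto simp: fun_eq_iff algebra_simps)
    have Dh_cont: "continuous_on UNIV (\<lambda>x. Dh x (0, 1))"
      unfolding Dh_def by (simp, intro continuous_intros cont) auto
    have W0': "W x $ i = 0" "h x = 0" if "x \<notin> S" for x
      using W0[OF that] by (simp_all add: h_def)
    have "DW i x (horiz B i x) = DW i x (axis i 1, 0) + Dh x (0, 1)" for x
      using linear_horiz[OF has_derivative_linear[OF der]] by (simp add: Dh_def)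
    then show ?thesis
      using integral_derivative_compact_support_eq_0[OF der cont S W0'(1)]
        integral_derivative_compact_support_eq_0[OF h_der Dh_cont S W0'(2)]
      by simp
  qed
  then show "integrable lebesgue (\<lambda>x. \<Sum>i\<in>UNIV. DW i x (horiz B i x))"
    and "(\<integral>x. (\<Sum>i\<in>UNIV. DW i x (horiz B i x)) \<partial>lebesgue) = 0"
    by (simp_all add: Bochner_Integration.integral_sum)
qed

section \<open>Fields that are \<open>C\<^sup>1\<close> off the vertical line\<close>

locale hdiv_off_Lline =
  fixes B :: "real^'m::finite^'m" and V :: "(real^'m) \<times> real \<Rightarrow> real^'m"
    and F :: "(real^'m) \<times> real \<Rightarrow> real"
    and DV :: "'m \<Rightarrow> (real^'m) \<times> real \<Rightarrow> (real^'m) \<times> real \<Rightarrow> real"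
  assumes card_ge_2: "CARD('m) \<ge> 2"
    and has_derivative_V: "\<And>i x. x \<notin> Lline \<Longrightarrow> ((\<lambda>y. V y $ i) has_derivative DV i x) (at x)"
    and continuous_DV: "\<And>i v. continuous_on (- Lline) (\<lambda>x. DV i x v)"
    and F_eq: "\<And>x. x \<notin> Lline \<Longrightarrow> F x = (\<Sum>i\<in>UNIV. DV i x (horiz B i x))"
    and V_bounded: "\<And>K. compact K \<Longrightarrow> K \<subseteq> - {0} \<Longrightarrow> bounded (V ` (K - Lline))"
    and F_bounded: "\<And>K. compact K \<Longrightarrow> K \<subseteq> - {0} \<Longrightarrow> bounded (F ` (K - Lline))"
begin

lemma continuous_on_V_nth: "continuous_on (- Lline) (\<lambda>x. V x $ i)"
  using has_derivative_V by (intro continuous_at_imp_continuous_on ballI has_derivative_continuous) auto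

lemma continuous_on_V: "continuous_on (- Lline) V"
  using continuous_on_vec_lambda[of _ "\<lambda>i x. V x $ i"] continuous_on_V_nth by simp

lemma continuous_on_F: "continuous_on (- Lline) F"
proof (rule continuous_on_eq)
  show "continuous_on (- Lline) (\<lambda>x. \<Sum>i\<in>UNIV. DV i x (axis i 1, 0) + (B *v fst x) $ i / 2 * DV i x (0, 1))"
    by (intro continuous_intros continuous_DV) auto
  show "(\<Sum>i\<in>UNIV. DV i x (axis i 1, 0) + (B *v fst x) $ i / 2 * DV i x (0, 1)) = F x" if "x \<in> - Lline" for x
    using that F_eq linear_horiz[OF has_derivative_linear[OF has_derivative_V]] by simp
qed

lemma integral_hdiv_vanishing_near_Lline:
  assumes \<Phi>_der: "\<And>x. (\<Phi> has_derivative D\<Phi> x) (at x)" and D\<Phi>_cont: "\<And>v. continuous_on UNIV (\<lambda>x. D\<Phi> x v)"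
    and K: "compact K" "\<And>x. x \<notin> K \<Longrightarrow> \<Phi> x = 0"
    and U: "open U" "Lline \<subseteq> U" "\<And>x. x \<in> U \<Longrightarrow> \<Phi> x = 0"
  shows "integrable lebesgue (\<lambda>x. F x * \<Phi> x + V x \<bullet> hgrad B \<Phi> x)"
    and "(\<integral>x. F x * \<Phi> x + V x \<bullet> hgrad B \<Phi> x \<partial>lebesgue) = 0"
proof -
  have \<Phi>_U: "\<Phi> x = 0" "D\<Phi> x = (\<lambda>_. 0)" if "x \<in> U" for x
  proof -
    show "\<Phi> x = 0"
      using that U(3) by simp
    have "(\<Phi> has_derivative (\<lambda>_. 0)) (at x)"
      by (rule has_derivative_transform_within_open[OF has_derivative_const U(1) that]) (use U(3) in auto)
    then show "D\<Phi> x = (\<lambda>_. 0)"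
      using has_derivative_unique[OF \<Phi>_der] by blast
  qed
  define DW where "DW i x w = (if x \<in> Lline then 0 else DV i x w * \<Phi> x + V x $ i * D\<Phi> x w)" for i x w
  have W_der: "((\<lambda>y. (\<Phi> y *\<^sub>R V y) $ i) has_derivative DW i x) (at x)" for i x
  proof (cases "x \<in> Lline")
    case True
    have "((\<lambda>y. (\<Phi> y *\<^sub>R V y) $ i) has_derivative (\<lambda>_. 0)) (at x)"
      by (rule has_derivative_transform_within_open[OF has_derivative_const U(1)])
        (use True U \<Phi>_U in auto)
    then show ?thesis
      using True by (simp add: DW_def[abs_def])
  next
    case False
    show ?thesis
      unfolding vector_scaleR_component real_scaleR_def
      by (rule has_derivative_eq_rhs[OF has_derivative_mult[OF \<Phi>_der has_derivative_V[OF False]]])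
        (use False in \<open>auto simp: DW_def fun_eq_iff\<close>)
  qed
  have \<Phi>_cont: "continuous_on UNIV \<Phi>"
    by (intro continuous_at_imp_continuous_on ballI has_derivative_continuous[OF \<Phi>_der])
  have DW_cont: "continuous_on UNIV (\<lambda>x. DW i x v)" for i v
  proof (rule continuous_on_vanishing_near_Lline[OF _ U(1,2)])
    have "continuous_on (- Lline) (\<lambda>x. DV i x v * \<Phi> x + V x $ i * D\<Phi> x v)"
      by (intro continuous_on_add continuous_on_mult continuous_DV continuous_on_V_nth
          continuous_on_subset[OF D\<Phi>_cont] continuous_on_subset[OF \<Phi>_cont] subset_UNIV)
    then show "continuous_on (- Lline) (\<lambda>x. DW i x v)"
      by (rule continuous_on_eq) (simp add: DW_def)
    show "DW i x v = 0" if "x \<in> U" for x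
      using that by (simp add: DW_def \<Phi>_U)
  qed
  have W0: "\<Phi> x *\<^sub>R V x = 0" if "x \<notin> K" for x
    using K(2)[OF that] by simp
  have div: "(\<Sum>i\<in>UNIV. DW i x (horiz B i x)) = F x * \<Phi> x + V x \<bullet> hgrad B \<Phi> x" for x
  proof (cases "x \<in> Lline")
    case True
    then have "x \<in> U"
      using U(2) by blast
    then have "\<Phi> x = 0" "hgrad B \<Phi> x = 0"
      using \<Phi>_U hgrad_eq_horiz[OF \<Phi>_der] by (auto simp: vec_eq_iff)
    then show ?thesis
      using True by (simp add: DW_def)
  next
    case False
    then show ?thesis
      by (simp add: DW_def F_eq sum_distrib_left inner_vec_def hgrad_eq_horiz[OF \<Phi>_der]
          sum.distrib mult.commute)
  qed
  show "integrable lebesgue (\<lambda>x. F x * \<Phi> x + V x \<bullet> hgrad B \<Phi> x)"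
    and "(\<integral>x. F x * \<Phi> x + V x \<bullet> hgrad B \<Phi> x \<partial>lebesgue) = 0"
    using integral_hdiv_compact_support_eq_0[where B=B, OF W_der DW_cont K(1) W0] by (simp_all add: div)
qed

lemma integrable_test_terms:
  assumes \<phi>: "test_fun (- {0}) \<phi>"
  shows "integrable lebesgue (\<lambda>x. F x * \<phi> x)" and "integrable lebesgue (\<lambda>x. V x \<bullet> hgrad B \<phi> x)"
proof -
  obtain K where K: "compact K" "K \<subseteq> - {0}" "\<And>x. x \<notin> K \<Longrightarrow> \<phi> x = 0" "\<And>x. x \<notin> K \<Longrightarrow> hgrad B \<phi> x = 0"
    using test_funE[where B=B, OF \<phi>] by metis
  obtain MF MV where MF: "\<forall>x\<in>K - Lline. \<bar>F x\<bar> \<le> MF" and MV: "\<forall>x\<in>K - Lline. norm (V x) \<le> MV"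
    using F_bounded[OF K(1,2)] V_bounded[OF K(1,2)] unfolding bounded_iff by auto
  have hgrad_cont: "continuous_on UNIV (hgrad B \<phi>)"
    by (rule continuous_on_hgrad[OF test_fun_C1(1,2)[OF \<phi>]])
  obtain M\<phi> Mg where M\<phi>: "\<And>x. norm (\<phi> x) \<le> M\<phi>" and Mg: "\<And>x. norm (hgrad B \<phi> x) \<le> Mg"
    using continuous_compact_support_bounded[OF test_fun_C1(3)[OF \<phi>] K(1,3)]
      continuous_compact_support_bounded[OF hgrad_cont K(1,4)] by blast
  show "integrable lebesgue (\<lambda>x. F x * \<phi> x)"
  proof (rule integrable_continuous_off_Lline[OF _ K(1)])
    show "continuous_on (- Lline) (\<lambda>x. F x * \<phi> x)"
      by (intro continuous_intros continuous_on_F continuous_on_subset[OF test_fun_C1(3)[OF \<phi>]] subset_UNIV)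
    show "\<bar>F x * \<phi> x\<bar> \<le> MF * M\<phi>" if "x \<in> K - Lline" for x
      unfolding abs_mult using MF M\<phi>[of x] that by (intro mult_mono) auto
  qed (use K in auto)
  show "integrable lebesgue (\<lambda>x. V x \<bullet> hgrad B \<phi> x)"
  proof (rule integrable_continuous_off_Lline[OF _ K(1)])
    show "continuous_on (- Lline) (\<lambda>x. V x \<bullet> hgrad B \<phi> x)"
      by (intro continuous_intros continuous_on_V continuous_on_subset[OF hgrad_cont] subset_UNIV)
    show "\<bar>V x \<bullet> hgrad B \<phi> x\<bar> \<le> MV * Mg" if "x \<in> K - Lline" for x
    proof -
      have "\<bar>V x \<bullet> hgrad B \<phi> x\<bar> \<le> norm (V x) * norm (hgrad B \<phi> x)"
        by (rule Cauchy_Schwarz_ineq2)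
      also have "\<dots> \<le> MV * Mg"
      proof -
        have V: "norm (V x) \<le> MV"
          using MV that by blast
        show ?thesis
          by (rule mult_mono[OF V Mg order_trans[OF norm_ge_zero V] norm_ge_zero])
      qed
      finally show ?thesis .
    qed
  qed (use K in auto)
qed

lemma integral_cutoff_identity:
  assumes \<phi>: "test_fun (- {0}) \<phi>" and r: "r > 0"
  shows "integrable lebesgue (\<lambda>x. \<phi> x * (V x \<bullet> cutoff_grad r x))"
    and "(\<integral>x. cutoff r x * (F x * \<phi> x + V x \<bullet> hgrad B \<phi> x) \<partial>lebesgue)
           + (\<integral>x. \<phi> x * (V x \<bullet> cutoff_grad r x) \<partial>lebesgue) = 0"
proof -
  obtain K where K: "compact K" "K \<subseteq> - {0}" "\<And>x. x \<notin> K \<Longrightarrow> \<phi> x = 0"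
    "\<And>x. x \<notin> K \<Longrightarrow> hgrad B \<phi> x = 0"
    using test_funE[where B=B, OF \<phi>] by metis
  let ?D\<phi> = "\<lambda>x. frechet_derivative \<phi> (at x)"
  let ?\<Phi> = "\<lambda>x. \<phi> x * cutoff r x"
  have \<Phi>_der: "(?\<Phi> has_derivative (\<lambda>w. \<phi> x * (cutoff_grad r x \<bullet> fst w) + ?D\<phi> x w * cutoff r x)) (at x)" for x
    by (rule has_derivative_mult[OF test_fun_C1(1)[OF \<phi>] has_derivative_cutoff])
  have D\<Phi>_cont: "continuous_on UNIV (\<lambda>x. \<phi> x * (cutoff_grad r x \<bullet> fst w) + ?D\<phi> x w * cutoff r x)" for w
    by (intro continuous_intros test_fun_C1(3)[OF \<phi>] test_fun_C1(2)[OF \<phi>] continuous_on_cutoff)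
  have U: "open {x. norm (fst x) < r}" "Lline \<subseteq> {x. norm (fst x) < r}"
    using r by (auto intro!: open_Collect_less continuous_intros)
  have \<Phi>_K: "?\<Phi> x = 0" if "x \<notin> K" for x
    using K(3)[OF that] by simp
  have \<Phi>_U: "?\<Phi> x = 0" if "x \<in> {x. norm (fst x) < r}" for x
    using cutoff_near_Lline[of x r] that by simp
  note \<Phi>_div = integral_hdiv_vanishing_near_Lline[OF \<Phi>_der D\<Phi>_cont K(1) \<Phi>_K U \<Phi>_U]
  define G where "G x = F x * \<phi> x + V x \<bullet> hgrad B \<phi> x" for x
  have G: "integrable lebesgue (\<lambda>x. cutoff r x * G x)"
    unfolding G_def by (intro integrable_cutoff_mult Bochner_Integration.integrable_add integrable_test_terms[OF \<phi>])
  have \<Phi>_eq: "F x * ?\<Phi> x + V x \<bullet> hgrad B ?\<Phi> x = cutoff r x * G x + \<phi> x * (V x \<bullet> cutoff_grad r x)" for x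
    by (simp add: G_def hgrad_mult_cutoff[OF test_fun_C1(1)[OF \<phi>]] inner_add_right algebra_simps)
  show "integrable lebesgue (\<lambda>x. \<phi> x * (V x \<bullet> cutoff_grad r x))"
    using Bochner_Integration.integrable_diff[OF \<Phi>_div(1) G] by (simp add: \<Phi>_eq)
  then show "(\<integral>x. cutoff r x * (F x * \<phi> x + V x \<bullet> hgrad B \<phi> x) \<partial>lebesgue)
           + (\<integral>x. \<phi> x * (V x \<bullet> cutoff_grad r x) \<partial>lebesgue) = 0"
    using \<Phi>_div(2) G by (simp add: \<Phi>_eq G_def)
qed

lemma cutoff_error_bound:
  assumes \<phi>: "test_fun (- {0}) \<phi>"
  obtains c where "\<And>r. 0 < r \<Longrightarrow> r \<le> 1 \<Longrightarrow> \<bar>\<integral>x. \<phi> x * (V x \<bullet> cutoff_grad r x) \<partial>lebesgue\<bar> \<le> c * r"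
proof -
  obtain K where K: "compact K" "K \<subseteq> - {0}" "\<And>x. x \<notin> K \<Longrightarrow> \<phi> x = 0"
    "\<And>x. x \<notin> K \<Longrightarrow> hgrad B \<phi> x = 0"
    using test_funE[where B=B, OF \<phi>] by metis
  obtain MV where MV: "\<forall>x\<in>K - Lline. norm (V x) \<le> MV"
    using V_bounded[OF K(1,2)] unfolding bounded_iff by auto
  obtain M\<phi> where M\<phi>: "\<And>x. norm (\<phi> x) \<le> M\<phi>"
    using continuous_compact_support_bounded[OF test_fun_C1(3)[OF \<phi>] K(1,3)] by blast
  obtain R where R: "\<forall>x\<in>K. norm x \<le> R"
    using compact_imp_bounded[OF K(1)] unfolding bounded_iff by blast
  define M where "M = M\<phi> * max MV 0"
  have "0 \<le> M\<phi>"
    using M\<phi>[of 0] norm_ge_zero[of "\<phi> 0"] by linarith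
  then have M: "0 \<le> M"
    by (simp add: M_def)
  have "AE x in lebesgue. norm (\<phi> x *\<^sub>R V x) \<le> M"
    using AE_not_in[OF Lline_null_sets]
  proof eventually_elim
    case (elim x)
    show ?case
    proof (cases "x \<in> K")
      case True
      then have "norm (V x) \<le> MV"
        using MV elim by simp
      then have "norm (V x) \<le> max MV 0"
        by simp
      then show ?thesis
        using M\<phi>[of x] \<open>0 \<le> M\<phi>\<close> by (simp add: M_def mult_mono)
    qed (use K(3) M in simp)
  qed
  moreover have "\<bar>snd x\<bar> \<le> max R 0" if "\<phi> x *\<^sub>R V x \<noteq> 0" for x
    using that K(3)[of x] R norm_snd_le[of "snd x" "fst x"] by force
  ultimately have "\<bar>\<integral>x. (\<phi> x *\<^sub>R V x) \<bullet> cutoff_grad r x \<partial>lebesgue\<bar> \<le> 8 * M * 4 ^ CARD('m) * (2 * max R 0) * r"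
    if "0 < r" "r \<le> 1" for r
    using integral_cutoff_identity(1)[OF \<phi> that(1)] that card_ge_2 M
    by (intro integral_cutoff_grad_le) auto
  then show thesis
    by (intro that[of "8 * M * 4 ^ CARD('m) * (2 * max R 0)"]) simp
qed

theorem hdiv_eq_punctured: "hdiv_eq B (- {0}) V F"
  unfolding hdiv_eq_def
proof (intro allI impI)
  fix \<phi> :: "(real^'m) \<times> real \<Rightarrow> real"
  assume \<phi>: "test_fun (- {0}) \<phi>"
  note integrable = integrable_test_terms[OF \<phi>]
  define G where "G x = F x * \<phi> x + V x \<bullet> hgrad B \<phi> x" for x
  define r :: "nat \<Rightarrow> real" where "r k = 1 / Suc k" for k
  have r: "r k > 0" "r k \<le> 1" "r \<longlonglongrightarrow> 0" for k
    unfolding r_def[abs_def] using LIMSEQ_inverse_real_of_nat by (auto simp: inverse_eq_divide)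
  obtain c where c: "\<And>r. 0 < r \<Longrightarrow> r \<le> 1 \<Longrightarrow> \<bar>\<integral>x. \<phi> x * (V x \<bullet> cutoff_grad r x) \<partial>lebesgue\<bar> \<le> c * r"
    using cutoff_error_bound[OF \<phi>] by metis
  have error_lim: "(\<lambda>k. \<integral>x. \<phi> x * (V x \<bullet> cutoff_grad (r k) x) \<partial>lebesgue) \<longlonglongrightarrow> 0"
  proof (rule Lim_null_comparison)
    show "\<forall>\<^sub>F k in sequentially. norm (\<integral>x. \<phi> x * (V x \<bullet> cutoff_grad (r k) x) \<partial>lebesgue) \<le> c * r k"
      using c r by (intro always_eventually allI) simp
    show "(\<lambda>k. c * r k) \<longlonglongrightarrow> 0"
      by (rule tendsto_mult_right_zero[OF r(3)])
  qed
  have G_int: "integrable lebesgue G"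
    unfolding G_def[abs_def] using integrable by (rule Bochner_Integration.integrable_add)
  have "(\<lambda>k. (\<integral>x. cutoff (r k) x * G x \<partial>lebesgue) + (\<integral>x. \<phi> x * (V x \<bullet> cutoff_grad (r k) x) \<partial>lebesgue))
      \<longlonglongrightarrow> (\<integral>x. G x \<partial>lebesgue) + 0"
    by (intro tendsto_add tendsto_integral_cutoff G_int r error_lim)
  moreover have "(\<integral>x. cutoff (r k) x * G x \<partial>lebesgue) + (\<integral>x. \<phi> x * (V x \<bullet> cutoff_grad (r k) x) \<partial>lebesgue) = 0" for k
    unfolding G_def by (rule integral_cutoff_identity(2)[OF \<phi> r(1)])
  ultimately have "(\<integral>x. G x \<partial>lebesgue) = 0"
    by (simp add: LIMSEQ_const_iff)
  then show "integrable lebesgue (\<lambda>x. V x \<bullet> hgrad B \<phi> x) \<and> integrable lebesgue (\<lambda>x. F x * \<phi> x) \<and>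
      - (\<integral>x. V x \<bullet> hgrad B \<phi> x \<partial>lebesgue) = (\<integral>x. F x * \<phi> x \<partial>lebesgue)"
    using integrable by (simp add: G_def Bochner_Integration.integral_add)
qed

end

section \<open>The two fields of the theorem\<close>

locale regular_gauge =
  fixes B :: "real^'m::finite^'m" and d :: "(real^'m) \<times> real \<Rightarrow> real"
  assumes pos_homogeneous: "pos_homogeneous d" and regular: "regular B d"
begin

definition Dd :: "(real^'m) \<times> real \<Rightarrow> (real^'m) \<times> real \<Rightarrow> real" where
  "Dd x = frechet_derivative d (at x)"

definition D2d :: "(real^'m) \<times> real \<Rightarrow> (real^'m) \<times> real \<Rightarrow> (real^'m) \<times> real \<Rightarrow> real" where
  "D2d v x = frechet_derivative (\<lambda>y. Dd y v) (at x)"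

lemma C2_off_Lline: "Ck_on (Suc (Suc 0)) (- Lline) d"
  using regular unfolding regular_def smooth_on_def by blast

lemma has_derivative_d: "x \<notin> Lline \<Longrightarrow> (d has_derivative Dd x) (at x)"
  unfolding Dd_def by (rule Ck_on_SucD(1)[OF C2_off_Lline]) simp

lemma has_derivative_Dd: "x \<notin> Lline \<Longrightarrow> ((\<lambda>y. Dd y v) has_derivative D2d v x) (at x)"
  unfolding D2d_def Dd_def by (rule Ck_on_SucD(1)[OF Ck_on_SucD(2)[OF C2_off_Lline]]) simp

lemma continuous_on_D2d: "continuous_on (- Lline) (\<lambda>x. D2d v x w)"
  using Ck_on_SucD(2)[OF Ck_on_SucD(2)[OF C2_off_Lline]] unfolding D2d_def Dd_def by simp

lemma continuous_on_Dd: "continuous_on (- Lline) (\<lambda>x. Dd x v)"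
  by (intro continuous_at_imp_continuous_on ballI has_derivative_continuous[OF has_derivative_Dd]) simp

lemma continuous_on_d: "continuous_on S d"
  using pos_homogeneous continuous_on_subset unfolding pos_homogeneous_def by blast

lemma d_pos: "x \<noteq> 0 \<Longrightarrow> d x > 0"
  using pos_homogeneous unfolding pos_homogeneous_def by blast

lemma D2d_symmetric:
  assumes x: "x \<notin> Lline"
  shows "D2d v x w = D2d w x v"
proof (rule second_derivative_symmetric[where S="- Lline"])
  have "open (- Lline)"
    by (rule open_Compl[OF closed_Lline])
  then have "continuous (at x) (\<lambda>y. D2d u y u')" for u u'
    using continuous_on_eq_continuous_at[OF \<open>open (- Lline)\<close>, THEN iffD1, OF continuous_on_D2d[of u u']] x
    by (meson ComplI)
  then show "continuous (at x) (\<lambda>y. D2d v y w)" "continuous (at x) (\<lambda>y. D2d w y v)"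
    by blast+
  show "open (- Lline)" "x \<in> - Lline"
    using \<open>open (- Lline)\<close> x by simp_all
qed (use has_derivative_d has_derivative_Dd in blast)+

lemma hgrad_d: "hgrad B d x $ i = Dd x (axis i 1, 0) + (B *v fst x) $ i / 2 * Dd x (0, 1)"
  by (simp add: hgrad_def dz_def dt_def Dd_def)

lemma dt_d: "dt d x = Dd x (0, 1)"
  by (simp add: dt_def Dd_def)

lemma bounded_hgrad_d: "compact K \<Longrightarrow> K \<subseteq> - {0} \<Longrightarrow> bounded (hgrad B d ` (K - Lline))"
  and bounded_dt_d: "compact K \<Longrightarrow> K \<subseteq> - {0} \<Longrightarrow> bounded (dt d ` (K - Lline))"
  using regular unfolding regular_def by blast+

lemma d_pos_off_Lline: "x \<notin> Lline \<Longrightarrow> d x > 0"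
  by (rule d_pos) auto

lemma hdiv_eq_z_div_power:
  assumes card: "CARD('m) \<ge> 2"
  shows "hdiv_eq B (- {0}) (\<lambda>x. (1 / d x powr b) *\<^sub>R fst x)
     (\<lambda>x. real CARD('m) / d x powr b - b / d x powr (b + 1) * (fst x \<bullet> hgrad B d x))"
proof -
  define DV where "DV i x w = 1 / d x powr b * fst w $ i - b / d x powr (b + 1) * Dd x w * fst x $ i"
    for i x w
  have "hdiv_off_Lline B (\<lambda>x. (1 / d x powr b) *\<^sub>R fst x)
     (\<lambda>x. real CARD('m) / d x powr b - b / d x powr (b + 1) * (fst x \<bullet> hgrad B d x)) DV"
  proof
    show "2 \<le> CARD('m)"
      by (rule card)
  next
    fix i and x :: "(real^'m) \<times> real"
    assume x: "x \<notin> Lline"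
    have "((\<lambda>y. 1 / d y powr b * fst y $ i) has_derivative
        (\<lambda>w. 1 / d x powr b * fst w $ i + - b / d x powr (b + 1) * Dd x w * fst x $ i)) (at x)"
      by (rule has_derivative_mult[OF has_derivative_inverse_powr[OF d_pos_off_Lline[OF x] has_derivative_d[OF x]]])
        (auto intro!: derivative_eq_intros bounded_linear.has_derivative[OF bounded_linear_vec_nth])
    then show "((\<lambda>y. ((1 / d y powr b) *\<^sub>R fst y) $ i) has_derivative DV i x) (at x)"
      by (simp add: DV_def[abs_def])
  next
    show "continuous_on (- Lline) (\<lambda>x. DV i x v)" for i v
      unfolding DV_def by (intro continuous_intros continuous_on_d continuous_on_Dd) (auto dest: d_pos_off_Lline)
  next
    fix x :: "(real^'m) \<times> real"
    assume x: "x \<notin> Lline"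
    have "DV i x (horiz B i x) = 1 / d x powr b - b / d x powr (b + 1) * (fst x $ i * hgrad B d x $ i)" for i
      by (simp add: DV_def horiz_def hgrad_eq_horiz[OF has_derivative_d[OF x]])
    then show "real CARD('m) / d x powr b - b / d x powr (b + 1) * (fst x \<bullet> hgrad B d x)
        = (\<Sum>i\<in>UNIV. DV i x (horiz B i x))"
      by (simp add: sum_subtractf inner_vec_def sum_distrib_left)
  next
    fix K :: "((real^'m) \<times> real) set"
    assume K: "compact K" "K \<subseteq> - {0}"
    have cont: "continuous_on (- {0}) (\<lambda>x. 1 / d x powr c)" for c
      by (intro continuous_intros continuous_on_d) (auto dest: d_pos)
    show "bounded ((\<lambda>x. (1 / d x powr b) *\<^sub>R fst x) ` (K - Lline))"
      using K by (intro bounded_continuous_off_origin continuous_intros cont)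
    show "bounded ((\<lambda>x. real CARD('m) / d x powr b - b / d x powr (b + 1) * (fst x \<bullet> hgrad B d x)) ` (K - Lline))"
      using K
      by (intro bounded_minus_comp bounded_continuous_off_origin
          bounded_bilinear_image[OF bounded_bilinear_mult] bounded_bilinear_image[OF bounded_bilinear_inner]
          bounded_hgrad_d continuous_intros cont continuous_on_d) (auto dest: d_pos)
  qed
  then show ?thesis
    by (rule hdiv_off_Lline.hdiv_eq_punctured)
qed

definition hgrad_deriv :: "'m \<Rightarrow> (real^'m) \<times> real \<Rightarrow> (real^'m) \<times> real \<Rightarrow> real" where
  "hgrad_deriv j x w = D2d (axis j 1, 0) x w + (B *v fst w) $ j / 2 * Dd x (0, 1)
     + (B *v fst x) $ j / 2 * D2d (0, 1) x w"

definition hhess :: "(real^'m) \<times> real \<Rightarrow> 'm \<Rightarrow> 'm \<Rightarrow> real" where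
  "hhess x i j = D2d (axis j 1, 0) x (horiz B i x) + (B *v fst x) $ j / 2 * D2d (0, 1) x (horiz B i x)"

lemma has_derivative_hgrad_d:
  assumes "x \<notin> Lline"
  shows "((\<lambda>y. hgrad B d y $ j) has_derivative hgrad_deriv j x) (at x)"
  unfolding hgrad_d hgrad_deriv_def
  by (rule has_derivative_eq_rhs[OF has_derivative_add[OF has_derivative_Dd[OF assms]
        has_derivative_mult[OF has_derivative_divide'[OF has_derivative_Bz has_derivative_const]
          has_derivative_Dd[OF assms]]]])
    (auto simp: fun_eq_iff algebra_simps)

lemma continuous_on_hgrad_deriv: "continuous_on (- Lline) (\<lambda>x. hgrad_deriv j x w)"
  unfolding hgrad_deriv_def by (intro continuous_intros continuous_on_D2d continuous_on_Dd) auto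

lemma hgrad_deriv_horiz:
  "hgrad_deriv j x (horiz B i x) = hhess x i j + B $ j $ i / 2 * dt d x"
  by (simp add: hgrad_deriv_def hhess_def dt_d horiz_def matrix_vector_mult_basis column_def algebra_simps)

lemma hhess_symmetric:
  assumes x: "x \<notin> Lline"
  shows "hhess x i j = hhess x j i"
proof -
  have lin: "D2d v x (horiz B k x) = D2d v x (axis k 1, 0) + (B *v fst x) $ k / 2 * D2d v x (0, 1)" for v k
    by (rule linear_horiz[OF has_derivative_linear[OF has_derivative_Dd[OF x]]])
  show ?thesis
    unfolding hhess_def lin
    using D2d_symmetric[OF x, of "(axis i 1, 0)" "(axis j 1, 0)"] D2d_symmetric[OF x, of "(axis j 1, 0)" "(0, 1)"]
      D2d_symmetric[OF x, of "(axis i 1, 0)" "(0, 1)"]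
    by (simp add: algebra_simps)
qed

lemma has_derivative_snd_div_d_powr:
  assumes x: "x \<notin> Lline"
  shows "((\<lambda>y. snd y / d y powr a) has_derivative
      (\<lambda>w. snd w / d x powr a - a * snd x / d x powr (a + 1) * Dd x w)) (at x)"
proof -
  have "((\<lambda>y. snd y * (1 / d y powr a)) has_derivative
      (\<lambda>w. snd x * (- a / d x powr (a + 1) * Dd x w) + snd w * (1 / d x powr a))) (at x)"
    by (rule has_derivative_mult[OF bounded_linear_imp_has_derivative[OF bounded_linear_snd]
          has_derivative_inverse_powr[OF d_pos_off_Lline[OF x] has_derivative_d[OF x]]])
  then show ?thesis
    by (simp add: algebra_simps)
qed

lemma sum_matrix_inv_hgrad_deriv:
  assumes skew: "transpose B = - B" and ker: "\<forall>x. B *v x = 0 \<longrightarrow> x = 0" and x: "x \<notin> Lline"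
  shows "(\<Sum>i\<in>UNIV. \<Sum>j\<in>UNIV. matrix_inv B $ i $ j * hgrad_deriv j x (horiz B i x)) = real CARD('m) / 2 * dt d x"
proof -
  have "(\<Sum>i\<in>UNIV. \<Sum>j\<in>UNIV. matrix_inv B $ i $ j * hgrad_deriv j x (horiz B i x))
      = (\<Sum>i\<in>UNIV. \<Sum>j\<in>UNIV. matrix_inv B $ i $ j * hhess x i j)
        + dt d x / 2 * (\<Sum>i\<in>UNIV. \<Sum>j\<in>UNIV. matrix_inv B $ i $ j * B $ j $ i)"
    by (simp add: hgrad_deriv_horiz algebra_simps sum.distrib sum_distrib_left)
  then show ?thesis
    using skew_sum_symmetric_eq_0[OF transpose_matrix_inv_skew[OF skew ker] hhess_symmetric[OF x]]
    by (simp add: sum_matrix_inv_mult_transpose[OF ker])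
qed

lemma hdiv_eq_t_Binv_hgrad_div_power:
  assumes card: "CARD('m) \<ge> 2" and skew: "transpose B = - B" and ker: "\<forall>x. B *v x = 0 \<longrightarrow> x = 0"
  shows "hdiv_eq B (- {0}) (\<lambda>x. (snd x / d x powr a) *\<^sub>R (matrix_inv B *v hgrad B d x))
     (\<lambda>x. - (1/2) * (fst x \<bullet> hgrad B d x) / d x powr a + real CARD('m) / 2 * snd x / d x powr a * dt d x)"
proof -
  let ?C = "matrix_inv B"
  define Df where "Df x w = snd w / d x powr a - a * snd x / d x powr (a + 1) * Dd x w" for x w
  define DV where "DV i x w = Df x w * (?C *v hgrad B d x) $ i
    + snd x / d x powr a * (\<Sum>j\<in>UNIV. ?C $ i $ j * hgrad_deriv j x w)" for i x w
  have "hdiv_off_Lline B (\<lambda>x. (snd x / d x powr a) *\<^sub>R (?C *v hgrad B d x))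
     (\<lambda>x. - (1/2) * (fst x \<bullet> hgrad B d x) / d x powr a + real CARD('m) / 2 * snd x / d x powr a * dt d x) DV"
  proof
    show "2 \<le> CARD('m)"
      by (rule card)
  next
    fix i and x :: "(real^'m) \<times> real"
    assume x: "x \<notin> Lline"
    have "((\<lambda>y. snd y / d y powr a * (\<Sum>j\<in>UNIV. ?C $ i $ j * hgrad B d y $ j)) has_derivative DV i x) (at x)"
      unfolding DV_def Df_def
      by (rule has_derivative_eq_rhs[OF has_derivative_mult[OF has_derivative_snd_div_d_powr[OF x]
            has_derivative_sum[OF has_derivative_mult[OF has_derivative_const has_derivative_hgrad_d[OF x]]]]])
        (auto simp: fun_eq_iff matrix_vector_mult_def algebra_simps)
    then show "((\<lambda>y. ((snd y / d y powr a) *\<^sub>R (?C *v hgrad B d y)) $ i) has_derivative DV i x) (at x)"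
      by (simp add: matrix_vector_mult_def)
  next
    show "continuous_on (- Lline) (\<lambda>x. DV i x v)" for i v
      unfolding DV_def Df_def matrix_vector_mult_def hgrad_d
      by (intro continuous_intros continuous_on_d continuous_on_Dd continuous_on_hgrad_deriv)
        (auto dest: d_pos_off_Lline)
  next
    fix x :: "(real^'m) \<times> real"
    assume x: "x \<notin> Lline"
    let ?h = "hgrad B d x" and ?z = "fst x" and ?D = "d x powr a"
    have Df_horiz: "Df x (horiz B i x) = (B *v ?z) $ i / (2 * ?D) - a * snd x / d x powr (a + 1) * ?h $ i" for i
      by (simp add: Df_def hgrad_eq_horiz[OF has_derivative_d[OF x]] horiz_def)
    have "(\<Sum>i\<in>UNIV. Df x (horiz B i x) * (?C *v ?h) $ i)
        = (B *v ?z) \<bullet> (?C *v ?h) / (2 * ?D) - a * snd x / d x powr (a + 1) * (?h \<bullet> (?C *v ?h))"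
      by (simp add: Df_horiz inner_vec_def sum_subtractf sum_distrib_left sum_divide_distrib algebra_simps)
    also have "\<dots> = - (?z \<bullet> ?h) / (2 * ?D)"
      using skew_inner_left[OF skew, of ?z "?C *v ?h"]
      by (simp add: skew_inner_self[OF transpose_matrix_inv_skew[OF skew ker]]
          matrix_vector_mul_assoc matrix_inv_of_trivial_kernel(2)[OF ker])
    finally have first: "(\<Sum>i\<in>UNIV. Df x (horiz B i x) * (?C *v ?h) $ i) = - (?z \<bullet> ?h) / (2 * ?D)" .
    have "(\<Sum>i\<in>UNIV. DV i x (horiz B i x))
        = (\<Sum>i\<in>UNIV. Df x (horiz B i x) * (?C *v ?h) $ i)
          + snd x / ?D * (\<Sum>i\<in>UNIV. \<Sum>j\<in>UNIV. ?C $ i $ j * hgrad_deriv j x (horiz B i x))"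
      by (simp add: DV_def sum.distrib sum_distrib_left)
    also have "\<dots> = - (?z \<bullet> ?h) / (2 * ?D) + snd x / ?D * (real CARD('m) / 2 * dt d x)"
      by (simp only: first sum_matrix_inv_hgrad_deriv[OF skew ker x])
    finally show "- (1/2) * (?z \<bullet> ?h) / ?D + real CARD('m) / 2 * snd x / ?D * dt d x
        = (\<Sum>i\<in>UNIV. DV i x (horiz B i x))"
      by (simp add: field_simps)
  next
    fix K :: "((real^'m) \<times> real) set"
    assume K: "compact K" "K \<subseteq> - {0}"
    have cont: "continuous_on (- {0}) (\<lambda>x. c * snd x / d x powr a)" for c
      by (intro continuous_intros continuous_on_d) (auto dest: d_pos)
    have "bounded ((\<lambda>x. snd x / d x powr a) ` (K - Lline))"
      using bounded_continuous_off_origin[OF cont[of 1] K] by simp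
    moreover have "bounded ((\<lambda>x. ?C *v hgrad B d x) ` (K - Lline))"
      using bounded_linear_image[OF bounded_hgrad_d[OF K] matrix_vector_mul_bounded_linear[of ?C]]
      by (simp add: image_image)
    ultimately show "bounded ((\<lambda>x. (snd x / d x powr a) *\<^sub>R (?C *v hgrad B d x)) ` (K - Lline))"
      by (rule bounded_bilinear_image[OF bounded_bilinear_scaleR])
    have "continuous_on (- {0}) (\<lambda>x. - (1/2) / d x powr a)" "continuous_on (- {0}) (fst :: _ \<Rightarrow> real^'m)"
      by (intro continuous_intros continuous_on_d; auto dest: d_pos)+
    then have "bounded ((\<lambda>x. (- (1/2) / d x powr a) * (fst x \<bullet> hgrad B d x)
        + (real CARD('m) / 2 * snd x / d x powr a) * dt d x) ` (K - Lline))"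
      using K by (intro bounded_plus_comp bounded_bilinear_image[OF bounded_bilinear_mult]
          bounded_bilinear_image[OF bounded_bilinear_inner] bounded_continuous_off_origin
          bounded_hgrad_d bounded_dt_d cont)
    then show "bounded ((\<lambda>x. - (1/2) * (fst x \<bullet> hgrad B d x) / d x powr a + real CARD('m) / 2 * snd x / d x powr a * dt d x) ` (K - Lline))"
      by simp
  qed
  then show ?thesis
    by (rule hdiv_off_Lline.hdiv_eq_punctured)
qed

end

theorem lemma2p3:
  fixes n :: nat and B :: "real^'m::finite^'m" and p \<theta> :: real
    and d :: "(real^'m) \<times> real \<Rightarrow> real"
  assumes "CARD('m) = 2 * n"
    and "transpose B = - B"
    and "\<forall>x. B *v x = 0 \<longrightarrow> x = 0"
    and "p \<ge> 2"
    and "pos_homogeneous d" and "regular B d"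
  shows "hdiv_eq B (- {0})
           (\<lambda>(z, t). (t / d (z, t) powr (p * \<theta> + 1)) *\<^sub>R (matrix_inv B *v hgrad B d (z, t)))
           (\<lambda>(z, t). - (1/2) * (z \<bullet> hgrad B d (z, t)) / d (z, t) powr (p * \<theta> + 1)
                     + real n * t / d (z, t) powr (p * \<theta> + 1) * dt d (z, t))
       \<and> hdiv_eq B (- {0})
           (\<lambda>(z, t). (1 / d (z, t) powr (p * \<theta>)) *\<^sub>R z)
           (\<lambda>(z, t). 2 * real n / d (z, t) powr (p * \<theta>)
                     - p * \<theta> / d (z, t) powr (p * \<theta> + 1) * (z \<bullet> hgrad B d (z, t)))"
proof -
  \<comment> \<open>Neither \<open>p \<ge> 2\<close> nor the limit condition (d.3) in \<open>regular\<close> is needed.\<close>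
  interpret regular_gauge B d
    using assms(5,6) by unfold_locales
  have "CARD('m) > 0"
    by simp
  then have card: "CARD('m) \<ge> 2"
    using assms(1) by simp
  have n: "real CARD('m) / 2 = real n" "real CARD('m) = 2 * real n"
    using assms(1) by simp_all
  show ?thesis
    using hdiv_eq_t_Binv_hgrad_div_power[OF card assms(2,3), of "p * \<theta> + 1"]
      hdiv_eq_z_div_power[OF card, of "p * \<theta>"]
    unfolding n by (simp add: case_prod_unfold)
qed

end
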